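(* Let the setting described in the context hold, with the repetitive transmission protocol (TP3). Then for every $t\in\{0,\kappa,2\kappa,\ldots\}$ the finite-horizon optimal control problem $$\min_{\eta_t,\Theta_t}\ \mathbb{E}_{x_t}\big[x_{t:N+1}^\top\mathcal{Q}x_{t:N+1}+(u^a_{t:N})^\top\mathcal{R}u^a_{t:N}\big]$$ subject to $x_{t:N+1}=\mathcal{A}x_t+\mathcal{B}u^a_{t:N}+\mathcal{D}w_{t:N}$, $u^a_{t:N}=\mathcal{G}\eta_t+\mathcal{S}\Theta_t\varphi(w_{t:N-1})$, and $u_s\in\mathbb{U}$ for all $s$, is convex and feasible, and it can be rewritten as the following tractable program with tightened constraints: $$\min_{\eta_t,\Theta_t}\ c_t+2\,\mathrm{tr}\big(\Theta_t^\top\mu_{\mathcal{S}}^\top\mathcal{B}^\top\mathcal{Q}\mathcal{D}\Sigma'_{\varphi}\big)+2x_t^\top\mathcal{A}^\top\mathcal{Q}\mathcal{B}\mu_{\mathcal{G}}\eta_t+\mathrm{tr}\big(\eta_t^\top\Sigma_{\mathcal{G}}\eta_t\big)+\mathrm{tr}\big(\Theta_t^\top\Sigma_{\mathcal{S}}\Theta_t\Sigma_{\varphi}\big)$$ subject to: $\Theta_t$ has the strictly lower block triangular structure described in the context, and $|\eta_t^{(i)}|+\|\Theta_t^{(i)}\|_1\varphi_{\max}\le U_{\max}$ for all $i=1,\ldots,Nm$, where $\eta_t^{(i)}$ is the $i$-th component of $\eta_t$ and $\Theta_t^{(i)}$ the $i$-th row of $\Theta_t$.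
   Context: System: $x_{t+1}=Ax_t+Bu^a_t+w_t$, $x_0=\bar x\in\mathbb{R}^d$, with $A\in\mathbb{R}^{d\times d}$, $B\in\mathbb{R}^{d\times m}$. $(w_t)_{t\in\mathbb{N}}$ is an i.i.d. sequence of zero-mean $\mathbb{R}^d$-valued random vectors with bounded fourth moments, each component of $w_t$ symmetrically distributed about the origin. The state is measured perfectly at every time and the sensor-to-controller channel is noiseless. Controls must lie in $\mathbb{U}=\{v\in\mathbb{R}^m:\|v\|_\infty\le U_{\max}\}$, $U_{\max}>0$. Data are sent from controller to actuator over an erasure channel; $(\nu_t)_{t\in\mathbb{N}}$ is an i.i.d. Bernoulli $\{0,1\}$ sequence with $\mathbb{E}[\nu_t]=p\in\,]0,1]$, independent of $(w_t)$; $\nu_t=1$ means successful transmission at time $t$. Acknowledgements are available to the controller, so $w_t=x_{t+1}-Ax_t-Bu^a_t$ is known to the controller at time $t+1$. $u^a_t$ denotes the control actually applied at the actuator. Notation: $s_{n:k}=(s_n^\top,\ldots,s_{n+k-1}^\top)^\top$. Fix a horizon $N\in\mathbb{N}$ and an integer $\kappa\in\{1,\ldots,N\}$. $Q,Q_f$ symmetric positive semidefinite, $R$ symmetric positive definite; $\mathcal{Q}=\mathrm{blkdiag}(Q,\ldots,Q,Q_f)$ ($N$ copies of $Q$), $\mathcal{R}=\mathrm{blkdiag}(R,\ldots,R)$ ($N$ copies). $\mathcal{A}=(I_d;A;\ldots;A^N)$; $\mathcal{B}\in\mathbb{R}^{(N+1)d\times Nm}$ has block $(i,j)$ ($i=0,\ldots,N$,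 $j=1,\ldots,N$) equal to $A^{i-j}B$ if $i\ge j$, $0$ otherwise; $\mathcal{D}\in\mathbb{R}^{(N+1)d\times Nd}$ has block $(i,j)$ equal to $A^{i-j}$ if $i\ge j$, $0$ otherwise. Policy class: $u_{t+\ell}=\eta_{t+\ell}+\sum_{i=0}^{\ell-1}\theta_{\ell,t+i}\varphi_{i+1}(w_{t+i})$, $\ell=0,\ldots,N-1$; in stacked form $u_{t:N}=\eta_t+\Theta_t\varphi(w_{t:N-1})$ with $\eta_t\in\mathbb{R}^{Nm}$, $\varphi(w_{t:N-1})=(\varphi_1(w_t)^\top,\ldots,\varphi_{N-1}(w_{t+N-2})^\top)^\top$, each $\varphi_i:\mathbb{R}^d\to\mathbb{R}^d$ a measurable saturation-type map symmetric about the origin with $\mathbb{E}[\varphi_i(w_{t+i-1})]=0$ and $\|\varphi(w_{t:N-1})\|_\infty\le\varphi_{\max}$; $\Theta_t\in\mathbb{R}^{Nm\times(N-1)d}$ strictly lower block triangular with block row $\ell$ equal to $(\theta_{\ell,t},\ldots,\theta_{\ell,t+\ell-1},0,\ldots,0)$, $\theta_{\ell,s}\in\mathbb{R}^{m\times d}$. Protocol TP3: the control value $u_{t+\ell}$ is transmitted at each step; in addition, the remaining (future) blocks of the first $m\kappa$ entries of $\eta_t$ are transmitted at each step until the first successful transmission, stored in an actuator buffer and used in case of a later dropout (buffer emptied every $\kappa$ steps). Hence $u^a_{t:N}=\mathcal{G}\eta_t+\mathcal{S}\Theta_t\varphi(w_{t:N-1})$ where $\mathcal{S}=\mathrm{blkdiag}(\nu_tI_m,\ldots,\nu_{t+\kappa-1}I_m,I_{m(N-\kappa)})$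 and $\mathcal{G}=\mathrm{blkdiag}(\rho_tI_m,\rho_{t+1}I_m,\ldots,\rho_{t+\kappa-1}I_m,I_{m(N-\kappa)})$ with $\rho_t=\nu_t$ and $\rho_{t+\ell}=\rho_{t+\ell-1}+\big(\prod_{s=0}^{\ell-1}(1-\nu_{t+s})\big)\nu_{t+\ell}$. Quantities: $\Sigma_\varphi=\mathbb{E}[\varphi(w_{t:N-1})\varphi(w_{t:N-1})^\top]$, $\Sigma'_\varphi=\mathbb{E}[w_{t:N}\varphi(w_{t:N-1})^\top]$, $\Sigma_W=\mathbb{E}[w_{t:N}w_{t:N}^\top]$, $\mu_{\mathcal{S}}=\mathbb{E}[\mathcal{S}]$, $\Sigma_{\mathcal{S}}=\mathbb{E}[\mathcal{S}^\top(\mathcal{B}^\top\mathcal{Q}\mathcal{B}+\mathcal{R})\mathcal{S}]$, $\mu_{\mathcal{G}}=\mathbb{E}[\mathcal{G}]$, $\Sigma_{\mathcal{G}}=\mathbb{E}[\mathcal{G}^\top(\mathcal{B}^\top\mathcal{Q}\mathcal{B}+\mathcal{R})\mathcal{G}]$, $c_t=x_t^\top\mathcal{A}^\top\mathcal{Q}\mathcal{A}x_t+\mathrm{tr}(\mathcal{D}^\top\mathcal{Q}\mathcal{D}\Sigma_W)$. $\mathbb{E}_{x_t}$ is expectation conditional on $x_t$. *)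

theory Defs
  imports "HOL-Probability.Probability" "Jordan_Normal_Form.Matrix"
begin

definition mtrace :: "real mat \<Rightarrow> real" where
  "mtrace A = (\<Sum>i<dim_row A. A $$ (i, i))"

definition qform :: "real mat \<Rightarrow> real vec \<Rightarrow> real" where
  "qform P v = scalar_prod v (P *\<^sub>v v)"

definition outer :: "real vec \<Rightarrow> real vec \<Rightarrow> real mat" where
  "outer v u = mat (dim_vec v) (dim_vec u) (\<lambda>(i, j). v $ i * u $ j)"

definition blockmat :: "nat \<Rightarrow> nat \<Rightarrow> nat \<Rightarrow> nat \<Rightarrow> (nat \<Rightarrow> nat \<Rightarrow> real mat) \<Rightarrow> real mat" where
  "blockmat r c nr nc F =
     mat (nr * r) (nc * c) (\<lambda>(i, j). F (i div r) (j div c) $$ (i mod r, j mod c))"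

definition calA :: "nat \<Rightarrow> nat \<Rightarrow> real mat \<Rightarrow> real mat" where
  "calA N d A = blockmat d d (N + 1) 1 (\<lambda>i j. A ^\<^sub>m i)"

text \<open>Block (i,j), i = 0..N, j = 1..N, equals A^(i-j) B if i >= j; here columns are
  0-indexed (j' = j - 1), so the condition is j' < i and the power is i - j' - 1.\<close>
definition calB :: "nat \<Rightarrow> nat \<Rightarrow> nat \<Rightarrow> real mat \<Rightarrow> real mat \<Rightarrow> real mat" where
  "calB N d m A B = blockmat d m (N + 1) N
     (\<lambda>i j. if j < i then A ^\<^sub>m (i - j - 1) * B else 0\<^sub>m d m)"

definition calD :: "nat \<Rightarrow> nat \<Rightarrow> real mat \<Rightarrow> real mat" where
  "calD N d A = blockmat d d (N + 1) N
     (\<lambda>i j. if j < i then A ^\<^sub>m (i - j - 1) else 0\<^sub>m d d)"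

definition calQ :: "nat \<Rightarrow> nat \<Rightarrow> real mat \<Rightarrow> real mat \<Rightarrow> real mat" where
  "calQ N d Q Qf = blockmat d d (N + 1) (N + 1)
     (\<lambda>i j. if i = j then (if i = N then Qf else Q) else 0\<^sub>m d d)"

definition calR :: "nat \<Rightarrow> nat \<Rightarrow> real mat \<Rightarrow> real mat" where
  "calR N m R = blockmat m m N N (\<lambda>i j. if i = j then R else 0\<^sub>m m m)"

text \<open>The noise is given componentwise: W s \<omega> j is component j (j < d) of w_s(\<omega>).
  As an R^d-valued random vector it is the extensional function restricted to {..<d}.\<close>
definition wrv :: "nat \<Rightarrow> (nat \<Rightarrow> 'a \<Rightarrow> nat \<Rightarrow> real) \<Rightarrow> nat \<Rightarrow> 'a \<Rightarrow> nat \<Rightarrow> real" where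
  "wrv d W s \<omega> = restrict (W s \<omega>) {..<d}"

definition Rd :: "nat \<Rightarrow> (nat \<Rightarrow> real) measure" where
  "Rd d = PiM {..<d} (\<lambda>_. borel)"

definition wvec :: "nat \<Rightarrow> (nat \<Rightarrow> 'a \<Rightarrow> nat \<Rightarrow> real) \<Rightarrow> nat \<Rightarrow> 'a \<Rightarrow> real vec" where
  "wvec d W s \<omega> = vec d (W s \<omega>)"

definition wstack :: "nat \<Rightarrow> nat \<Rightarrow> (nat \<Rightarrow> 'a \<Rightarrow> nat \<Rightarrow> real) \<Rightarrow> nat \<Rightarrow> 'a \<Rightarrow> real vec" where
  "wstack d N W t \<omega> = vec (N * d) (\<lambda>i. W (t + i div d) \<omega> (i mod d))"

definition phistack :: "nat \<Rightarrow> nat \<Rightarrow> (nat \<Rightarrow> real vec \<Rightarrow> real vec)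
     \<Rightarrow> (nat \<Rightarrow> 'a \<Rightarrow> nat \<Rightarrow> real) \<Rightarrow> nat \<Rightarrow> 'a \<Rightarrow> real vec" where
  "phistack d N phi W t \<omega> =
     vec ((N - 1) * d) (\<lambda>i. phi (i div d + 1) (wvec d W (t + i div d) \<omega>) $ (i mod d))"

fun rho :: "(nat \<Rightarrow> 'a \<Rightarrow> real) \<Rightarrow> nat \<Rightarrow> nat \<Rightarrow> 'a \<Rightarrow> real" where
  "rho nu t 0 \<omega> = nu t \<omega>"
| "rho nu t (Suc l) \<omega> = rho nu t l \<omega> + (\<Prod>s\<le>l. 1 - nu (t + s) \<omega>) * nu (t + Suc l) \<omega>"

definition Smat :: "nat \<Rightarrow> nat \<Rightarrow> nat \<Rightarrow> (nat \<Rightarrow> 'a \<Rightarrow> real) \<Rightarrow> nat \<Rightarrow> 'a \<Rightarrow> real mat" where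
  "Smat m N \<kappa> nu t \<omega> = mat (N * m) (N * m)
     (\<lambda>(i, j). if i = j then (if i div m < \<kappa> then nu (t + i div m) \<omega> else 1) else 0)"

definition Gmat :: "nat \<Rightarrow> nat \<Rightarrow> nat \<Rightarrow> (nat \<Rightarrow> 'a \<Rightarrow> real) \<Rightarrow> nat \<Rightarrow> 'a \<Rightarrow> real mat" where
  "Gmat m N \<kappa> nu t \<omega> = mat (N * m) (N * m)
     (\<lambda>(i, j). if i = j then (if i div m < \<kappa> then rho nu t (i div m) \<omega> else 1) else 0)"

definition mexp :: "'a measure \<Rightarrow> nat \<Rightarrow> nat \<Rightarrow> ('a \<Rightarrow> real mat) \<Rightarrow> real mat" where
  "mexp M n k X = mat n k (\<lambda>(i, j). integral\<^sup>L M (\<lambda>\<omega>. X \<omega> $$ (i, j)))"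

definition uapplied where
  "uapplied d m N \<kappa> phi W nu t \<eta> \<Theta> \<omega> =
     Gmat m N \<kappa> nu t \<omega> *\<^sub>v \<eta> + Smat m N \<kappa> nu t \<omega> *\<^sub>v (\<Theta> *\<^sub>v phistack d N phi W t \<omega>)"

text \<open>Transmitted (computed) control u_{t:N} = eta + Theta phi(w_{t:N-1}).\<close>
definition ucomp where
  "ucomp d N phi W t \<eta> \<Theta> \<omega> = \<eta> + \<Theta> *\<^sub>v phistack d N phi W t \<omega>"

definition xtraj where
  "xtraj d m N \<kappa> A B phi W nu t xt \<eta> \<Theta> \<omega> =
     calA N d A *\<^sub>v xt + calB N d m A B *\<^sub>v uapplied d m N \<kappa> phi W nu t \<eta> \<Theta> \<omega>
     + calD N d A *\<^sub>v wstack d N W t \<omega>"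

definition Jcost where
  "Jcost M d m N \<kappa> A B Q Qf R phi W nu t xt \<eta> \<Theta> =
     integral\<^sup>L M (\<lambda>\<omega>. qform (calQ N d Q Qf) (xtraj d m N \<kappa> A B phi W nu t xt \<eta> \<Theta> \<omega>)
                    + qform (calR N m R) (uapplied d m N \<kappa> phi W nu t \<eta> \<Theta> \<omega>))"

definition theta_struct :: "nat \<Rightarrow> nat \<Rightarrow> nat \<Rightarrow> real mat \<Rightarrow> bool" where
  "theta_struct d m N \<Theta> \<longleftrightarrow> \<Theta> \<in> carrier_mat (N * m) ((N - 1) * d) \<and>
     (\<forall>i < N * m. \<forall>k < (N - 1) * d. i div m \<le> k div d \<longrightarrow> \<Theta> $$ (i, k) = 0)"

definition decision :: "nat \<Rightarrow> nat \<Rightarrow> nat \<Rightarrow> real vec \<Rightarrow> real mat \<Rightarrow> bool" where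
  "decision d m N \<eta> \<Theta> \<longleftrightarrow> \<eta> \<in> carrier_vec (N * m) \<and> theta_struct d m N \<Theta>"

definition feasible where
  "feasible M d m N phi W t Umax \<eta> \<Theta> \<longleftrightarrow> decision d m N \<eta> \<Theta> \<and>
     (AE \<omega> in M. \<forall>i < N * m. \<bar>ucomp d N phi W t \<eta> \<Theta> \<omega> $ i\<bar> \<le> Umax)"

definition tightened :: "nat \<Rightarrow> nat \<Rightarrow> nat \<Rightarrow> real \<Rightarrow> real \<Rightarrow> real vec \<Rightarrow> real mat \<Rightarrow> bool" where
  "tightened d m N phimax Umax \<eta> \<Theta> \<longleftrightarrow>
     (\<forall>i < N * m. \<bar>\<eta> $ i\<bar> + (\<Sum>k < (N - 1) * d. \<bar>\<Theta> $$ (i, k)\<bar>) * phimax \<le> Umax)"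

definition Mmat where
  "Mmat d m N A B Q Qf R =
     (calB N d m A B)\<^sup>T * calQ N d Q Qf * calB N d m A B + calR N m R"

definition SigPhi where
  "SigPhi M d N phi W t = mexp M ((N - 1) * d) ((N - 1) * d)
     (\<lambda>\<omega>. outer (phistack d N phi W t \<omega>) (phistack d N phi W t \<omega>))"

definition SigPhi' where
  "SigPhi' M d N phi W t = mexp M (N * d) ((N - 1) * d)
     (\<lambda>\<omega>. outer (wstack d N W t \<omega>) (phistack d N phi W t \<omega>))"

definition SigW where
  "SigW M d N W t = mexp M (N * d) (N * d)
     (\<lambda>\<omega>. outer (wstack d N W t \<omega>) (wstack d N W t \<omega>))"

definition muS where
  "muS M m N \<kappa> nu t = mexp M (N * m) (N * m) (Smat m N \<kappa> nu t)"

definition SigS where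
  "SigS M d m N \<kappa> A B Q Qf R nu t = mexp M (N * m) (N * m)
     (\<lambda>\<omega>. (Smat m N \<kappa> nu t \<omega>)\<^sup>T * Mmat d m N A B Q Qf R * Smat m N \<kappa> nu t \<omega>)"

definition muG where
  "muG M m N \<kappa> nu t = mexp M (N * m) (N * m) (Gmat m N \<kappa> nu t)"

definition SigG where
  "SigG M d m N \<kappa> A B Q Qf R nu t = mexp M (N * m) (N * m)
     (\<lambda>\<omega>. (Gmat m N \<kappa> nu t \<omega>)\<^sup>T * Mmat d m N A B Q Qf R * Gmat m N \<kappa> nu t \<omega>)"

definition ct where
  "ct M d N A Q Qf W t xt =
     qform ((calA N d A)\<^sup>T * calQ N d Q Qf * calA N d A) xt
     + mtrace ((calD N d A)\<^sup>T * calQ N d Q Qf * calD N d A * SigW M d N W t)"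

text \<open>c_t + 2 tr(Theta^T muS^T B^T Q D Sigma'_phi) + 2 x_t^T A^T Q B muG eta
  + tr(eta^T SigmaG eta) + tr(Theta^T SigmaS Theta Sigma_phi);
  the 1x1 trace tr(eta^T SigmaG eta) is written as the quadratic form.\<close>
definition Jtract where
  "Jtract M d m N \<kappa> A B Q Qf R phi W nu t xt \<eta> \<Theta> =
     ct M d N A Q Qf W t xt
     + 2 * mtrace (\<Theta>\<^sup>T * (muS M m N \<kappa> nu t)\<^sup>T * (calB N d m A B)\<^sup>T * calQ N d Q Qf
                   * calD N d A * SigPhi' M d N phi W t)
     + 2 * scalar_prod xt (((calA N d A)\<^sup>T * calQ N d Q Qf * calB N d m A B * muG M m N \<kappa> nu t) *\<^sub>v \<eta>)
     + qform (SigG M d m N \<kappa> A B Q Qf R nu t) \<eta>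
     + mtrace (\<Theta>\<^sup>T * SigS M d m N \<kappa> A B Q Qf R nu t * \<Theta> * SigPhi M d N phi W t)"

definition sym_psd :: "nat \<Rightarrow> real mat \<Rightarrow> bool" where
  "sym_psd n P \<longleftrightarrow> P \<in> carrier_mat n n \<and> P\<^sup>T = P \<and> (\<forall>v \<in> carrier_vec n. qform P v \<ge> 0)"

definition sym_pd :: "nat \<Rightarrow> real mat \<Rightarrow> bool" where
  "sym_pd n P \<longleftrightarrow> P \<in> carrier_mat n n \<and> P\<^sup>T = P \<and>
     (\<forall>v \<in> carrier_vec n. v \<noteq> 0\<^sub>v n \<longrightarrow> qform P v > 0)"

end

theory Submission
  imports Defs
begin

text \<open>For fixed decision variables the stage cost is a quadratic form in \<open>x\<^sub>t\<close>, \<open>\<eta>\<close>, the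
  stacked noise \<open>w\<close> and its saturation \<open>\<phi>(w)\<close>, with matrices that depend only on the dropouts
  (through the diagonal matrices \<open>G\<close> and \<open>S\<close>) and vectors that depend only on the noise.
  Expanding it gives eleven bilinear terms \<open>u\<^sup>T P v\<close>. Noise and channel are independent, so the
  expectation of each term factorises as \<open>tr (E[P] E[v u\<^sup>T])\<close>; the terms pairing a deterministic
  vector with the zero-mean \<open>w\<close> or \<open>\<phi>(w)\<close> vanish, and the remaining ones are the terms of the
  tractable objective. Convexity holds pointwise in \<open>\<omega>\<close> because state and applied control are
  affine in \<open>(\<eta>, \<Theta>)\<close> and the weights are positive semidefinite, and the tightened
  constraints bound each computed control by \<open>|\<eta>\<^sub>i| + \<parallel>\<Theta>\<^sub>i\<parallel>\<^sub>1 phimax\<close>.\<close>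

section \<open>Matrix identities\<close>

lemma mult_mat_entry_sum:
  "A \<in> carrier_mat n k \<Longrightarrow> B \<in> carrier_mat k l \<Longrightarrow> i < n \<Longrightarrow> j < l \<Longrightarrow>
   (A * B) $$ (i, j) = (\<Sum>a<k. A $$ (i, a) * B $$ (a, j))"
  by (simp add: scalar_prod_def atLeast0LessThan)

lemma mult_mat_vec_entry_sum:
  "A \<in> carrier_mat n k \<Longrightarrow> v \<in> carrier_vec k \<Longrightarrow> i < n \<Longrightarrow>
   (A *\<^sub>v v) $ i = (\<Sum>a<k. A $$ (i, a) * v $ a)"
  by (simp add: scalar_prod_def atLeast0LessThan)

lemma mtrace_mult_sum:
  assumes "A \<in> carrier_mat n k" "B \<in> carrier_mat k n"
  shows "mtrace (A * B) = (\<Sum>i<n. \<Sum>j<k. A $$ (i, j) * B $$ (j, i))"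
  using assms unfolding mtrace_def
  by (auto simp: scalar_prod_def atLeast0LessThan intro!: sum.cong)

lemma mtrace_mult_outer:
  assumes "P \<in> carrier_mat n k" "v \<in> carrier_vec k" "u \<in> carrier_vec n"
  shows "mtrace (P * outer v u) = u \<bullet> (P *\<^sub>v v)"
proof -
  have "outer v u \<in> carrier_mat k n" using assms by (simp add: outer_def)
  then have "mtrace (P * outer v u) = (\<Sum>i<n. \<Sum>j<k. P $$ (i, j) * (v $ j * u $ i))"
    using assms by (simp add: mtrace_mult_sum outer_def)
  also have "\<dots> = u \<bullet> (P *\<^sub>v v)"
    using assms by (simp add: scalar_prod_def atLeast0LessThan sum_distrib_left mult_ac)
  finally show ?thesis .
qed

lemma scalar_prod_mult_transpose_mult:
  fixes C P C' :: "real mat"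
  assumes "C \<in> carrier_mat n k" "P \<in> carrier_mat n l" "C' \<in> carrier_mat l j"
    "a \<in> carrier_vec k" "b \<in> carrier_vec j"
  shows "(C *\<^sub>v a) \<bullet> (P *\<^sub>v (C' *\<^sub>v b)) = a \<bullet> ((C\<^sup>T * P * C') *\<^sub>v b)"
proof -
  have "(C\<^sup>T * P * C') *\<^sub>v b = (C\<^sup>T * P) *\<^sub>v (C' *\<^sub>v b)"
    by (rule assoc_mult_mat_vec) (use assms in auto)
  also have "\<dots> = C\<^sup>T *\<^sub>v (P *\<^sub>v (C' *\<^sub>v b))"
    by (rule assoc_mult_mat_vec) (use assms in auto)
  moreover have "(C *\<^sub>v a) \<bullet> (P *\<^sub>v (C' *\<^sub>v b)) = a \<bullet> (C\<^sup>T *\<^sub>v (P *\<^sub>v (C' *\<^sub>v b)))"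
    using transpose_vec_mult_scalar[of "C\<^sup>T" k n "P *\<^sub>v (C' *\<^sub>v b)" a] assms by simp
  ultimately show ?thesis by simp
qed

lemma scalar_prod_mult_transpose_mult_left:
  fixes C C2 P C' :: "real mat"
  assumes "C \<in> carrier_mat n k" "C2 \<in> carrier_mat k k2" "P \<in> carrier_mat n l"
    "C' \<in> carrier_mat l j" "a \<in> carrier_vec k2" "b \<in> carrier_vec j"
  shows "(C *\<^sub>v (C2 *\<^sub>v a)) \<bullet> (P *\<^sub>v (C' *\<^sub>v b)) = a \<bullet> ((C2\<^sup>T * (C\<^sup>T * P * C')) *\<^sub>v b)"
proof -
  have "(C *\<^sub>v (C2 *\<^sub>v a)) \<bullet> (P *\<^sub>v (C' *\<^sub>v b)) = (C2 *\<^sub>v a) \<bullet> ((C\<^sup>T * P * C') *\<^sub>v b)"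
    by (rule scalar_prod_mult_transpose_mult) (use assms in auto)
  also have "\<dots> = (C2 *\<^sub>v a) \<bullet> ((C\<^sup>T * P * C') *\<^sub>v (1\<^sub>m j *\<^sub>v b))" using assms by simp
  also have "\<dots> = a \<bullet> ((C2\<^sup>T * (C\<^sup>T * P * C') * 1\<^sub>m j) *\<^sub>v b)"
    by (rule scalar_prod_mult_transpose_mult) (use assms in auto)
  also have "C2\<^sup>T * (C\<^sup>T * P * C') * 1\<^sub>m j = C2\<^sup>T * (C\<^sup>T * P * C')"
    using assms by (intro right_mult_one_mat) auto
  finally show ?thesis .
qed

lemma scalar_prod_mult_transpose_mult_right:
  fixes C C2 P C' :: "real mat"
  assumes "C \<in> carrier_mat n k" "P \<in> carrier_mat n l" "C' \<in> carrier_mat l j"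
    "C2 \<in> carrier_mat j j2" "a \<in> carrier_vec k" "b \<in> carrier_vec j2"
  shows "(C *\<^sub>v a) \<bullet> (P *\<^sub>v (C' *\<^sub>v (C2 *\<^sub>v b))) = a \<bullet> ((C\<^sup>T * P * C' * C2) *\<^sub>v b)"
proof -
  have "(C *\<^sub>v a) \<bullet> (P *\<^sub>v (C' *\<^sub>v (C2 *\<^sub>v b))) = a \<bullet> ((C\<^sup>T * P * C') *\<^sub>v (C2 *\<^sub>v b))"
    using assms by (intro scalar_prod_mult_transpose_mult) auto
  also have "(C\<^sup>T * P * C') *\<^sub>v (C2 *\<^sub>v b) = (C\<^sup>T * P * C' * C2) *\<^sub>v b"
    using assms by (intro assoc_mult_mat_vec[symmetric]) auto
  finally show ?thesis .
qed

lemma scalar_prod_sym_mat_swap: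
  fixes P :: "real mat"
  assumes "P \<in> carrier_mat n n" "P\<^sup>T = P" "a \<in> carrier_vec n" "b \<in> carrier_vec n"
  shows "a \<bullet> (P *\<^sub>v b) = b \<bullet> (P *\<^sub>v a)"
proof -
  have "a \<bullet> (P *\<^sub>v b) = (P\<^sup>T *\<^sub>v a) \<bullet> b"
    using transpose_vec_mult_scalar[of P n n b a] assms by simp
  also have "\<dots> = b \<bullet> (P\<^sup>T *\<^sub>v a)" using assms by (intro comm_scalar_prod[of _ n]) auto
  finally show ?thesis using assms by simp
qed

lemma qform_add3:
  fixes Q :: "real mat"
  assumes Q: "Q \<in> carrier_mat n n" "Q\<^sup>T = Q"
    and v: "a \<in> carrier_vec n" "b \<in> carrier_vec n" "c \<in> carrier_vec n"
  shows "qform Q (a + b + c) = a \<bullet> (Q *\<^sub>v a) + 2 * (a \<bullet> (Q *\<^sub>v b)) + 2 * (a \<bullet> (Q *\<^sub>v c))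
     + b \<bullet> (Q *\<^sub>v b) + 2 * (b \<bullet> (Q *\<^sub>v c)) + c \<bullet> (Q *\<^sub>v c)"
proof -
  have swap: "b \<bullet> (Q *\<^sub>v a) = a \<bullet> (Q *\<^sub>v b)" "c \<bullet> (Q *\<^sub>v a) = a \<bullet> (Q *\<^sub>v c)"
    "c \<bullet> (Q *\<^sub>v b) = b \<bullet> (Q *\<^sub>v c)"
    using scalar_prod_sym_mat_swap[OF Q] v by auto
  have "qform Q (a + b + c) = (a + b + c) \<bullet> (Q *\<^sub>v a + Q *\<^sub>v b + Q *\<^sub>v c)"
    unfolding qform_def using Q v
    by (simp add: mult_add_distrib_mat_vec[of Q n n "a + b" c] mult_add_distrib_mat_vec[of Q n n a b]
        del: assoc_add_vec)
  also have "\<dots> = a \<bullet> (Q *\<^sub>v a) + a \<bullet> (Q *\<^sub>v b) + a \<bullet> (Q *\<^sub>v c)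
     + (b \<bullet> (Q *\<^sub>v a) + b \<bullet> (Q *\<^sub>v b) + b \<bullet> (Q *\<^sub>v c))
     + (c \<bullet> (Q *\<^sub>v a) + c \<bullet> (Q *\<^sub>v b) + c \<bullet> (Q *\<^sub>v c))"
    using Q v by (simp add: add_scalar_prod_distrib[of _ n] scalar_prod_add_distrib[of _ n])
  finally show ?thesis unfolding swap by simp
qed

lemma qform_add_mult_mat_vec:
  fixes P G S :: "real mat"
  assumes "P \<in> carrier_mat q q" "G \<in> carrier_mat q k" "S \<in> carrier_mat q l"
    "a \<in> carrier_vec k" "b \<in> carrier_vec l"
  shows "qform P (G *\<^sub>v a + S *\<^sub>v b) = a \<bullet> ((G\<^sup>T * P * G) *\<^sub>v a) + a \<bullet> ((G\<^sup>T * P * S) *\<^sub>v b)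
     + b \<bullet> ((S\<^sup>T * P * G) *\<^sub>v a) + b \<bullet> ((S\<^sup>T * P * S) *\<^sub>v b)"
proof -
  have "qform P (G *\<^sub>v a + S *\<^sub>v b) = (G *\<^sub>v a) \<bullet> (P *\<^sub>v (G *\<^sub>v a)) + (G *\<^sub>v a) \<bullet> (P *\<^sub>v (S *\<^sub>v b))
     + (S *\<^sub>v b) \<bullet> (P *\<^sub>v (G *\<^sub>v a)) + (S *\<^sub>v b) \<bullet> (P *\<^sub>v (S *\<^sub>v b))"
    unfolding qform_def using assms
    by (simp add: mult_add_distrib_mat_vec[of _ q q] add_scalar_prod_distrib[of _ q]
        scalar_prod_add_distrib[of _ q])
  then show ?thesis using assms by (simp add: scalar_prod_mult_transpose_mult)
qed

lemma qform_mult_add: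
  fixes C P R :: "real mat"
  assumes "C \<in> carrier_mat n q" "P \<in> carrier_mat n n" "R \<in> carrier_mat q q" "u \<in> carrier_vec q"
  shows "(C *\<^sub>v u) \<bullet> (P *\<^sub>v (C *\<^sub>v u)) + qform R u = qform (C\<^sup>T * P * C + R) u"
proof -
  have "(C\<^sup>T * P * C + R) *\<^sub>v u = (C\<^sup>T * P * C) *\<^sub>v u + R *\<^sub>v u"
    using assms by (intro add_mult_distrib_mat_vec) auto
  moreover have "(C\<^sup>T * P * C) *\<^sub>v u \<in> carrier_vec q" "R *\<^sub>v u \<in> carrier_vec q"
    using assms by (metis mult_carrier_mat transpose_carrier_mat mult_mat_vec_carrier)+
  ultimately have "qform (C\<^sup>T * P * C + R) u = u \<bullet> ((C\<^sup>T * P * C) *\<^sub>v u) + qform R u"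
    unfolding qform_def using assms by (simp only: scalar_prod_add_distrib[of _ q])
  also have "u \<bullet> ((C\<^sup>T * P * C) *\<^sub>v u) = (C *\<^sub>v u) \<bullet> (P *\<^sub>v (C *\<^sub>v u))"
    by (rule scalar_prod_mult_transpose_mult[symmetric]) (use assms in auto)
  finally show ?thesis by simp
qed

lemma mult_mat_assoc5:
  fixes A B C D E :: "real mat"
  assumes A: "A \<in> carrier_mat n1 n2" and B: "B \<in> carrier_mat n2 n3" and C: "C \<in> carrier_mat n3 n4"
    and D: "D \<in> carrier_mat n4 n5" and E: "E \<in> carrier_mat n5 n6"
  shows "A * (B * (C * D * E)) = A * B * C * D * E"
proof -
  have AB: "A * B \<in> carrier_mat n1 n3" by (rule mult_carrier_mat[OF A B])
  have ABC: "A * B * C \<in> carrier_mat n1 n4" by (rule mult_carrier_mat[OF AB C])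
  have DE: "D * E \<in> carrier_mat n4 n6" by (rule mult_carrier_mat[OF D E])
  have CDE: "C * (D * E) \<in> carrier_mat n3 n6" by (rule mult_carrier_mat[OF C DE])
  show ?thesis
    using assoc_mult_mat[OF C D E] assoc_mult_mat[OF ABC D E] assoc_mult_mat[OF AB C DE]
      assoc_mult_mat[OF A B CDE] by (simp only:)
qed

lemma stage_cost_expansion:
  fixes CA CB CD CQ CR G S :: "real mat" and xt eta f X :: "real vec"
  assumes CA: "CA \<in> carrier_mat pd d" and CB: "CB \<in> carrier_mat pd q"
    and CD: "CD \<in> carrier_mat pd r" and CQ: "CQ \<in> carrier_mat pd pd" "CQ\<^sup>T = CQ"
    and CR: "CR \<in> carrier_mat q q" and G: "G \<in> carrier_mat q q" and S: "S \<in> carrier_mat q q"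
    and xt: "xt \<in> carrier_vec d" and eta: "eta \<in> carrier_vec q" and f: "f \<in> carrier_vec q"
    and X: "X \<in> carrier_vec r"
  defines "MM \<equiv> CB\<^sup>T * CQ * CB + CR" and "K \<equiv> CB\<^sup>T * CQ * CD"
  shows "qform CQ (CA *\<^sub>v xt + CB *\<^sub>v (G *\<^sub>v eta + S *\<^sub>v f) + CD *\<^sub>v X)
      + qform CR (G *\<^sub>v eta + S *\<^sub>v f) =
     xt \<bullet> ((CA\<^sup>T * CQ * CA) *\<^sub>v xt) + X \<bullet> ((CD\<^sup>T * CQ * CD) *\<^sub>v X)
     + 2 * (xt \<bullet> ((CA\<^sup>T * CQ * CD) *\<^sub>v X))
     + 2 * (xt \<bullet> ((CA\<^sup>T * CQ * CB * G) *\<^sub>v eta)) + 2 * (xt \<bullet> ((CA\<^sup>T * CQ * CB * S) *\<^sub>v f))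
     + 2 * (eta \<bullet> ((G\<^sup>T * K) *\<^sub>v X)) + 2 * (f \<bullet> ((S\<^sup>T * K) *\<^sub>v X))
     + eta \<bullet> ((G\<^sup>T * MM * G) *\<^sub>v eta) + eta \<bullet> ((G\<^sup>T * MM * S) *\<^sub>v f)
     + f \<bullet> ((S\<^sup>T * MM * G) *\<^sub>v eta) + f \<bullet> ((S\<^sup>T * MM * S) *\<^sub>v f)"
proof -
  define u where "u = G *\<^sub>v eta + S *\<^sub>v f"
  have u: "u \<in> carrier_vec q" using G S eta f u_def by auto
  have MM: "MM \<in> carrier_mat q q" using CB CQ CR unfolding MM_def by simp
  have split: "qform CQ (CA *\<^sub>v xt + CB *\<^sub>v u + CD *\<^sub>v X) + qform CR u =
      (CA *\<^sub>v xt) \<bullet> (CQ *\<^sub>v (CA *\<^sub>v xt)) + 2 * ((CA *\<^sub>v xt) \<bullet> (CQ *\<^sub>v (CB *\<^sub>v u)))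
      + 2 * ((CA *\<^sub>v xt) \<bullet> (CQ *\<^sub>v (CD *\<^sub>v X)))
      + 2 * ((CB *\<^sub>v u) \<bullet> (CQ *\<^sub>v (CD *\<^sub>v X))) + (CD *\<^sub>v X) \<bullet> (CQ *\<^sub>v (CD *\<^sub>v X)) + qform MM u"
    using qform_add3[OF CQ, of "CA *\<^sub>v xt" "CB *\<^sub>v u" "CD *\<^sub>v X"]
      qform_mult_add[OF CB CQ(1) CR u] CA CB CD xt u X
    unfolding MM_def by simp
  have "(CA *\<^sub>v xt) \<bullet> (CQ *\<^sub>v (CB *\<^sub>v u)) =
      (CA *\<^sub>v xt) \<bullet> (CQ *\<^sub>v (CB *\<^sub>v (G *\<^sub>v eta))) + (CA *\<^sub>v xt) \<bullet> (CQ *\<^sub>v (CB *\<^sub>v (S *\<^sub>v f)))"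
    using CA CB CQ G S eta f xt unfolding u_def
    by (simp add: mult_add_distrib_mat_vec[of CB pd q] mult_add_distrib_mat_vec[of CQ pd pd]
        scalar_prod_add_distrib[of _ pd])
  also have "\<dots> = xt \<bullet> ((CA\<^sup>T * CQ * CB * G) *\<^sub>v eta) + xt \<bullet> ((CA\<^sup>T * CQ * CB * S) *\<^sub>v f)"
    using scalar_prod_mult_transpose_mult_right[OF CA CQ(1) CB G xt eta]
      scalar_prod_mult_transpose_mult_right[OF CA CQ(1) CB S xt f] by simp
  finally have state_control: "(CA *\<^sub>v xt) \<bullet> (CQ *\<^sub>v (CB *\<^sub>v u)) =
      xt \<bullet> ((CA\<^sup>T * CQ * CB * G) *\<^sub>v eta) + xt \<bullet> ((CA\<^sup>T * CQ * CB * S) *\<^sub>v f)" .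
  have "(CB *\<^sub>v u) \<bullet> (CQ *\<^sub>v (CD *\<^sub>v X)) =
      (CB *\<^sub>v (G *\<^sub>v eta)) \<bullet> (CQ *\<^sub>v (CD *\<^sub>v X)) + (CB *\<^sub>v (S *\<^sub>v f)) \<bullet> (CQ *\<^sub>v (CD *\<^sub>v X))"
    using CB CQ CD X G S eta f unfolding u_def
    by (simp add: mult_add_distrib_mat_vec[of CB pd q] add_scalar_prod_distrib[of _ pd])
  also have "\<dots> = eta \<bullet> ((G\<^sup>T * K) *\<^sub>v X) + f \<bullet> ((S\<^sup>T * K) *\<^sub>v X)"
    using scalar_prod_mult_transpose_mult_left[OF CB G CQ(1) CD eta X]
      scalar_prod_mult_transpose_mult_left[OF CB S CQ(1) CD f X] unfolding K_def by simp
  finally have control_noise: "(CB *\<^sub>v u) \<bullet> (CQ *\<^sub>v (CD *\<^sub>v X)) =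
      eta \<bullet> ((G\<^sup>T * K) *\<^sub>v X) + f \<bullet> ((S\<^sup>T * K) *\<^sub>v X)" .
  have "(CA *\<^sub>v xt) \<bullet> (CQ *\<^sub>v (CA *\<^sub>v xt)) = xt \<bullet> ((CA\<^sup>T * CQ * CA) *\<^sub>v xt)"
    "(CD *\<^sub>v X) \<bullet> (CQ *\<^sub>v (CD *\<^sub>v X)) = X \<bullet> ((CD\<^sup>T * CQ * CD) *\<^sub>v X)"
    "(CA *\<^sub>v xt) \<bullet> (CQ *\<^sub>v (CD *\<^sub>v X)) = xt \<bullet> ((CA\<^sup>T * CQ * CD) *\<^sub>v X)"
    by (rule scalar_prod_mult_transpose_mult; use CA CD CQ X xt in auto)+
  then show ?thesis
    using split state_control control_noise qform_add_mult_mat_vec[OF MM G S eta f]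
    unfolding u_def by (simp add: algebra_simps)
qed

section \<open>The stacked weight matrices\<close>

lemma sum_lessThan_mult_blocks:
  fixes g :: "nat \<Rightarrow> 'b::comm_monoid_add"
  shows "sum g {..<n * k} = (\<Sum>b<n. \<Sum>a<k. g (b * k + a))"
proof -
  have "sum g {..<n*k} = (\<Sum>b<n. sum g {b*k..<b*k+k})" using sum.nat_group[of g k n] by simp
  also have "\<dots> = (\<Sum>b<n. \<Sum>a<k. g (b*k + a))"
  proof -
    have "\<And>b. sum g {b*k..<b*k+k} = (\<Sum>a<k. g (b*k + a))"
      using sum.shift_bounds_nat_ivl[of g 0 _ k]
      by (simp add: atLeast0LessThan add.commute[of k] add.commute[of _ "_ * k"])
    then show ?thesis by simp
  qed
  finally show ?thesis .
qed

lemma calA_carrier[simp]: "calA N d A \<in> carrier_mat ((N+1)*d) d" by (simp add: calA_def blockmat_def)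
lemma calB_carrier[simp]: "calB N d m A B \<in> carrier_mat ((N+1)*d) (N*m)" by (simp add: calB_def blockmat_def)
lemma calD_carrier[simp]: "calD N d A \<in> carrier_mat ((N+1)*d) (N*d)" by (simp add: calD_def blockmat_def)
lemma calQ_carrier[simp]: "calQ N d Q Qf \<in> carrier_mat ((N+1)*d) ((N+1)*d)" by (simp add: calQ_def blockmat_def)
lemma calR_carrier[simp]: "calR N m R \<in> carrier_mat (N*m) (N*m)" by (simp add: calR_def blockmat_def)

lemma block_index_less:
  assumes "b < (nb::nat)" "a < r"
  shows "b * r + a < nb * r"
proof -
  have "b*r + a < (b+1)*r" using assms by simp
  also have "(b+1)*r \<le> nb*r" using assms by (intro mult_right_mono) auto
  finally show ?thesis .
qed

lemma qform_double_sum: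
  assumes "P \<in> carrier_mat n n" "v \<in> carrier_vec n"
  shows "qform P v = (\<Sum>i<n. \<Sum>j<n. v $ i * P $$ (i,j) * v $ j)"
  using assms by (simp add: qform_def scalar_prod_def atLeast0LessThan sum_distrib_left mult_ac)

lemma qform_blockdiag_mat:
  fixes F :: "nat \<Rightarrow> real mat"
  assumes F: "\<And>b. b < nb \<Longrightarrow> F b \<in> carrier_mat r r" and v: "v \<in> carrier_vec (nb*r)"
  shows "qform (blockmat r r nb nb (\<lambda>i j. if i = j then F i else 0\<^sub>m r r)) v
       = (\<Sum>b<nb. qform (F b) (vec r (\<lambda>a. v $ (b*r + a))))"
proof -
  let ?B = "blockmat r r nb nb (\<lambda>i j. if i = j then F i else 0\<^sub>m r r)"
  have B: "?B \<in> carrier_mat (nb*r) (nb*r)" by (simp add: blockmat_def)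
  have ent: "?B $$ (b*r + a, b'*r + a') = (if b = b' then F b $$ (a, a') else 0)"
    if "b < nb" "b' < nb" "a < r" "a' < r" for b b' a a'
  proof -
    have lt: "b*r + a < nb*r" "b'*r + a' < nb*r" using that by (auto intro: block_index_less)
    then show ?thesis using that by (simp add: blockmat_def)
  qed
  have "qform ?B v = (\<Sum>i<nb*r. \<Sum>j<nb*r. v $ i * ?B $$ (i,j) * v $ j)"
    by (rule qform_double_sum[OF B v])
  also have "\<dots> = (\<Sum>b<nb. \<Sum>a<r. \<Sum>b'<nb. \<Sum>a'<r.
       v $ (b*r+a) * ?B $$ (b*r+a, b'*r+a') * v $ (b'*r+a'))"
    by (simp add: sum_lessThan_mult_blocks)
  also have "\<dots> = (\<Sum>b<nb. \<Sum>a<r. \<Sum>b'<nb. \<Sum>a'<r.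
       (if b = b' then v $ (b*r+a) * F b $$ (a, a') * v $ (b*r+a') else 0))"
    by (intro sum.cong refl) (simp add: ent)
  also have "\<dots> = (\<Sum>b<nb. \<Sum>a<r. \<Sum>a'<r. v $ (b*r+a) * F b $$ (a, a') * v $ (b*r+a'))"
  proof (rule sum.cong[OF refl], rule sum.cong[OF refl])
    fix b a assume b: "b \<in> {..<nb}" and a: "a \<in> {..<r}"
    have "\<And>b'. (\<Sum>a'<r. (if b = b' then v $ (b*r+a) * F b $$ (a, a') * v $ (b*r+a') else 0))
       = (if b = b' then (\<Sum>a'<r. v $ (b*r+a) * F b $$ (a, a') * v $ (b*r+a')) else 0)" by simp
    then show "(\<Sum>b'<nb. \<Sum>a'<r. (if b = b' then v $ (b*r+a) * F b $$ (a, a') * v $ (b*r+a') else 0))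
      = (\<Sum>a'<r. v $ (b*r+a) * F b $$ (a, a') * v $ (b*r+a'))" using b by simp
  qed
  also have "\<dots> = (\<Sum>b<nb. qform (F b) (vec r (\<lambda>a. v $ (b*r + a))))"
    by (intro sum.cong refl) (simp add: qform_double_sum[OF F])
  finally show ?thesis .
qed

lemma calQ_psd:
  assumes Q: "sym_psd d Q" and Qf: "sym_psd d Qf" and v: "v \<in> carrier_vec ((N+1)*d)"
  shows "qform (calQ N d Q Qf) v \<ge> 0"
proof -
  have "qform (calQ N d Q Qf) v = (\<Sum>b<N+1. qform (if b = N then Qf else Q) (vec d (\<lambda>a. v $ (b*d + a))))"
    unfolding calQ_def
    using qform_blockdiag_mat[of "N+1" "\<lambda>i. if i = N then Qf else Q" d v] Q Qf v by (simp add: sym_psd_def)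
  also have "\<dots> \<ge> 0" using Q Qf unfolding sym_psd_def by (intro sum_nonneg) auto
  finally show ?thesis .
qed

lemma calR_psd:
  assumes R: "sym_pd m R" and v: "v \<in> carrier_vec (N*m)"
  shows "qform (calR N m R) v \<ge> 0"
proof -
  have "qform (calR N m R) v = (\<Sum>b<N. qform R (vec m (\<lambda>a. v $ (b*m + a))))"
    unfolding calR_def
    using qform_blockdiag_mat[of N "\<lambda>i. R" m v] R v by (simp add: sym_pd_def)
  also have "\<dots> \<ge> 0"
  proof (intro sum_nonneg)
    fix b
    let ?w = "vec m (\<lambda>a. v $ (b*m + a))"
    show "0 \<le> qform R ?w"
    proof (cases "?w = 0\<^sub>v m")
      case True then show ?thesis using R by (auto simp: qform_def sym_pd_def)
    next
      case False then show ?thesis using R unfolding sym_pd_def by (auto intro: less_imp_le)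
    qed
  qed
  finally show ?thesis .
qed

lemma calQ_sym:
  assumes Q: "sym_psd d Q" and Qf: "sym_psd d Qf"
  shows "(calQ N d Q Qf)\<^sup>T = calQ N d Q Qf"
proof (rule eq_matI)
  fix i j assume ij: "i < dim_row (calQ N d Q Qf)" "j < dim_col (calQ N d Q Qf)"
  then have ij: "i < (N+1)*d" "j < (N+1)*d" by (simp_all add: calQ_def blockmat_def)
  then have d: "i mod d < d" "j mod d < d" by (cases "d = 0"; auto)+
  have symQ: "Q $$ (a,b) = Q $$ (b,a)" "Qf $$ (a,b) = Qf $$ (b,a)" if "a < d" "b < d" for a b
  proof -
    have c: "Q \<in> carrier_mat d d" "Qf \<in> carrier_mat d d" and t: "Q\<^sup>T = Q" "Qf\<^sup>T = Qf"
      using Q Qf unfolding sym_psd_def by auto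
    have "Q\<^sup>T $$ (a,b) = Q $$ (b,a)" "Qf\<^sup>T $$ (a,b) = Qf $$ (b,a)" using c that by auto
    then show "Q $$ (a,b) = Q $$ (b,a)" "Qf $$ (a,b) = Qf $$ (b,a)" using t by simp_all
  qed
  show "(calQ N d Q Qf)\<^sup>T $$ (i, j) = calQ N d Q Qf $$ (i, j)"
    using ij d symQ by (simp add: calQ_def blockmat_def)
qed (simp_all add: calQ_def blockmat_def)

lemma qform_convex:
  fixes P :: "real mat"
  assumes P: "P \<in> carrier_mat n n" and psd: "\<And>w. w \<in> carrier_vec n \<Longrightarrow> qform P w \<ge> 0"
    and x: "x \<in> carrier_vec n" and y: "y \<in> carrier_vec n" and a: "0 \<le> a" "a \<le> 1"
  shows "qform P (a \<cdot>\<^sub>v x + (1 - a) \<cdot>\<^sub>v y) \<le> a * qform P x + (1 - a) * qform P y"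
proof -
  have z: "a \<cdot>\<^sub>v x + (1 - a) \<cdot>\<^sub>v y \<in> carrier_vec n" "x - y \<in> carrier_vec n" using x y by auto
  have "qform P (a \<cdot>\<^sub>v x + (1 - a) \<cdot>\<^sub>v y)
      = (\<Sum>i<n. \<Sum>j<n. (a * x $ i + (1-a) * y $ i) * P $$ (i,j) * (a * x $ j + (1-a) * y $ j))"
    using qform_double_sum[OF P z(1)] x y by simp
  also have "\<dots> = (\<Sum>i<n. \<Sum>j<n. a * (x $ i * P $$ (i,j) * x $ j) + (1-a) * (y $ i * P $$ (i,j) * y $ j)
        - a * (1 - a) * ((x $ i - y $ i) * P $$ (i,j) * (x $ j - y $ j)))"
    by (intro sum.cong refl) (simp add: algebra_simps)
  also have "\<dots> = a * qform P x + (1 - a) * qform P y - a * (1 - a) * qform P (x - y)"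
    using qform_double_sum[OF P x] qform_double_sum[OF P y] qform_double_sum[OF P z(2)] x y
    by (simp add: sum.distrib sum_subtractf sum_distrib_left)
  also have "\<dots> \<le> a * qform P x + (1 - a) * qform P y"
    using psd[OF z(2)] a by (simp add: mult_nonneg_nonneg)
  finally show ?thesis .
qed

section \<open>Affine dependence on the decision variables\<close>

lemma mult_mat_vec_lincomb:
  fixes C :: "real mat"
  assumes "C \<in> carrier_mat n k" "x \<in> carrier_vec k" "y \<in> carrier_vec k"
  shows "C *\<^sub>v (a \<cdot>\<^sub>v x + b \<cdot>\<^sub>v y) = a \<cdot>\<^sub>v (C *\<^sub>v x) + b \<cdot>\<^sub>v (C *\<^sub>v y)"
proof (rule eq_vecI)
  fix i assume "i < dim_vec (a \<cdot>\<^sub>v (C *\<^sub>v x) + b \<cdot>\<^sub>v (C *\<^sub>v y))"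
  then have i: "i < n" using assms by simp
  have c: "a \<cdot>\<^sub>v x + b \<cdot>\<^sub>v y \<in> carrier_vec k" using assms by simp
  show "(C *\<^sub>v (a \<cdot>\<^sub>v x + b \<cdot>\<^sub>v y)) $ i = (a \<cdot>\<^sub>v (C *\<^sub>v x) + b \<cdot>\<^sub>v (C *\<^sub>v y)) $ i"
    using i assms mult_mat_vec_entry_sum[OF assms(1) c i] mult_mat_vec_entry_sum[OF assms(1) assms(2) i]
      mult_mat_vec_entry_sum[OF assms(1) assms(3) i]
    by (simp add: algebra_simps sum.distrib sum_distrib_left)
qed (use assms in simp)

lemma lincomb_mat_mult_vec:
  fixes C1 C2 :: "real mat"
  assumes "C1 \<in> carrier_mat n k" "C2 \<in> carrier_mat n k" "v \<in> carrier_vec k"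
  shows "(a \<cdot>\<^sub>m C1 + b \<cdot>\<^sub>m C2) *\<^sub>v v = a \<cdot>\<^sub>v (C1 *\<^sub>v v) + b \<cdot>\<^sub>v (C2 *\<^sub>v v)"
proof (rule eq_vecI)
  fix i assume "i < dim_vec (a \<cdot>\<^sub>v (C1 *\<^sub>v v) + b \<cdot>\<^sub>v (C2 *\<^sub>v v))"
  then have i: "i < n" using assms by simp
  have c: "a \<cdot>\<^sub>m C1 + b \<cdot>\<^sub>m C2 \<in> carrier_mat n k" using assms by simp
  show "((a \<cdot>\<^sub>m C1 + b \<cdot>\<^sub>m C2) *\<^sub>v v) $ i = (a \<cdot>\<^sub>v (C1 *\<^sub>v v) + b \<cdot>\<^sub>v (C2 *\<^sub>v v)) $ i"
    using i assms mult_mat_vec_entry_sum[OF c assms(3) i] mult_mat_vec_entry_sum[OF assms(1) assms(3) i]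
      mult_mat_vec_entry_sum[OF assms(2) assms(3) i]
    by (simp add: algebra_simps sum.distrib sum_distrib_left)
qed (use assms in simp)

lemma add_lincomb_lincomb:
  fixes x1 x2 y1 y2 :: "real vec"
  assumes "x1 \<in> carrier_vec n" "x2 \<in> carrier_vec n" "y1 \<in> carrier_vec n" "y2 \<in> carrier_vec n"
  shows "(a \<cdot>\<^sub>v x1 + b \<cdot>\<^sub>v x2) + (a \<cdot>\<^sub>v y1 + b \<cdot>\<^sub>v y2) = a \<cdot>\<^sub>v (x1 + y1) + b \<cdot>\<^sub>v (x2 + y2)"
  by (rule eq_vecI) (use assms in \<open>auto simp: algebra_simps\<close>)

lemma add_lincomb_add_affine:
  fixes c x1 x2 e :: "real vec"
  assumes "c \<in> carrier_vec n" "x1 \<in> carrier_vec n" "x2 \<in> carrier_vec n" "e \<in> carrier_vec n"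
  shows "c + (a \<cdot>\<^sub>v x1 + (1 - a) \<cdot>\<^sub>v x2) + e = a \<cdot>\<^sub>v (c + x1 + e) + (1 - a) \<cdot>\<^sub>v (c + x2 + e)"
  by (rule eq_vecI) (use assms in \<open>auto simp: algebra_simps\<close>)

lemma uapplied_lincomb:
  assumes e1: "e1 \<in> carrier_vec (N*m)" and e2: "e2 \<in> carrier_vec (N*m)"
    and T1: "T1 \<in> carrier_mat (N*m) ((N-1)*d)" and T2: "T2 \<in> carrier_mat (N*m) ((N-1)*d)"
  shows "uapplied d m N \<kappa> phi W nu t (a \<cdot>\<^sub>v e1 + (1 - a) \<cdot>\<^sub>v e2) (a \<cdot>\<^sub>m T1 + (1 - a) \<cdot>\<^sub>m T2) \<omega>
     = a \<cdot>\<^sub>v uapplied d m N \<kappa> phi W nu t e1 T1 \<omega> + (1 - a) \<cdot>\<^sub>v uapplied d m N \<kappa> phi W nu t e2 T2 \<omega>"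
proof -
  let ?G = "Gmat m N \<kappa> nu t \<omega>" and ?S = "Smat m N \<kappa> nu t \<omega>" and ?F = "phistack d N phi W t \<omega>"
  have G: "?G \<in> carrier_mat (N*m) (N*m)" and S: "?S \<in> carrier_mat (N*m) (N*m)" and F: "?F \<in> carrier_vec ((N-1)*d)"
    by (simp_all add: Gmat_def Smat_def phistack_def)
  have "uapplied d m N \<kappa> phi W nu t (a \<cdot>\<^sub>v e1 + (1 - a) \<cdot>\<^sub>v e2) (a \<cdot>\<^sub>m T1 + (1 - a) \<cdot>\<^sub>m T2) \<omega>
     = (a \<cdot>\<^sub>v (?G *\<^sub>v e1) + (1 - a) \<cdot>\<^sub>v (?G *\<^sub>v e2)) + (a \<cdot>\<^sub>v (?S *\<^sub>v (T1 *\<^sub>v ?F)) + (1 - a) \<cdot>\<^sub>v (?S *\<^sub>v (T2 *\<^sub>v ?F)))"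
    unfolding uapplied_def mult_mat_vec_lincomb[OF G e1 e2] lincomb_mat_mult_vec[OF T1 T2 F]
    using mult_mat_vec_lincomb[OF S, of "T1 *\<^sub>v ?F" "T2 *\<^sub>v ?F"] T1 T2 F by simp
  also have "\<dots> = a \<cdot>\<^sub>v uapplied d m N \<kappa> phi W nu t e1 T1 \<omega> + (1 - a) \<cdot>\<^sub>v uapplied d m N \<kappa> phi W nu t e2 T2 \<omega>"
    unfolding uapplied_def by (rule add_lincomb_lincomb[of _ "N*m"]) (use G S e1 e2 T1 T2 F in auto)
  finally show ?thesis .
qed

lemma uapplied_carrier:
  assumes "e \<in> carrier_vec (N*m)" "T \<in> carrier_mat (N*m) ((N-1)*d)"
  shows "uapplied d m N \<kappa> phi W nu t e T \<omega> \<in> carrier_vec (N*m)"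
proof -
  have G: "Gmat m N \<kappa> nu t \<omega> \<in> carrier_mat (N*m) (N*m)" and S: "Smat m N \<kappa> nu t \<omega> \<in> carrier_mat (N*m) (N*m)"
    and F: "phistack d N phi W t \<omega> \<in> carrier_vec ((N-1)*d)"
    by (simp_all add: Gmat_def Smat_def phistack_def)
  show ?thesis unfolding uapplied_def
    by (intro add_carrier_vec mult_mat_vec_carrier[OF G] mult_mat_vec_carrier[OF S] mult_mat_vec_carrier[OF assms(2) F] assms(1))
qed

lemma xtraj_lincomb:
  assumes e1: "e1 \<in> carrier_vec (N*m)" and e2: "e2 \<in> carrier_vec (N*m)"
    and T1: "T1 \<in> carrier_mat (N*m) ((N-1)*d)" and T2: "T2 \<in> carrier_mat (N*m) ((N-1)*d)"
    and xt: "xt \<in> carrier_vec d"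
  shows "xtraj d m N \<kappa> A B phi W nu t xt (a \<cdot>\<^sub>v e1 + (1 - a) \<cdot>\<^sub>v e2) (a \<cdot>\<^sub>m T1 + (1 - a) \<cdot>\<^sub>m T2) \<omega>
     = a \<cdot>\<^sub>v xtraj d m N \<kappa> A B phi W nu t xt e1 T1 \<omega> + (1 - a) \<cdot>\<^sub>v xtraj d m N \<kappa> A B phi W nu t xt e2 T2 \<omega>"
proof -
  have u: "uapplied d m N \<kappa> phi W nu t e T \<omega> \<in> carrier_vec (N*m)"
    if "e \<in> carrier_vec (N*m)" "T \<in> carrier_mat (N*m) ((N-1)*d)" for e T
    using that by (rule uapplied_carrier)
  have CB: "calB N d m A B \<in> carrier_mat ((N+1)*d) (N*m)" by (rule calB_carrier)
  have CA: "calA N d A *\<^sub>v xt \<in> carrier_vec ((N+1)*d)" by (rule mult_mat_vec_carrier[OF calA_carrier xt])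
  have CD: "calD N d A *\<^sub>v wstack d N W t \<omega> \<in> carrier_vec ((N+1)*d)"
    by (rule mult_mat_vec_carrier[OF calD_carrier]) (unfold wstack_def, rule vec_carrier)
  have CBu: "calB N d m A B *\<^sub>v uapplied d m N \<kappa> phi W nu t e T \<omega> \<in> carrier_vec ((N+1)*d)"
    if "e \<in> carrier_vec (N*m)" "T \<in> carrier_mat (N*m) ((N-1)*d)" for e T
    using u[OF that] CB by simp
  show ?thesis
    unfolding xtraj_def uapplied_lincomb[OF e1 e2 T1 T2] mult_mat_vec_lincomb[OF CB u[OF e1 T1] u[OF e2 T2]]
    by (rule add_lincomb_add_affine[OF CA CBu[OF e1 T1] CBu[OF e2 T2] CD])
qed

lemma ucomp_lincomb:
  assumes e1: "e1 \<in> carrier_vec (N*m)" and e2: "e2 \<in> carrier_vec (N*m)"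
    and T1: "T1 \<in> carrier_mat (N*m) ((N-1)*d)" and T2: "T2 \<in> carrier_mat (N*m) ((N-1)*d)"
  shows "ucomp d N phi W t (a \<cdot>\<^sub>v e1 + (1 - a) \<cdot>\<^sub>v e2) (a \<cdot>\<^sub>m T1 + (1 - a) \<cdot>\<^sub>m T2) \<omega>
     = a \<cdot>\<^sub>v ucomp d N phi W t e1 T1 \<omega> + (1 - a) \<cdot>\<^sub>v ucomp d N phi W t e2 T2 \<omega>"
proof -
  have F: "phistack d N phi W t \<omega> \<in> carrier_vec ((N-1)*d)" by (simp add: phistack_def)
  show ?thesis unfolding ucomp_def lincomb_mat_mult_vec[OF T1 T2 F]
    by (rule add_lincomb_lincomb[of _ "N*m"]) (use e1 e2 T1 T2 F in auto)
qed

lemma xtraj_carrier: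
  assumes "e \<in> carrier_vec (N * m)" "T \<in> carrier_mat (N * m) ((N - 1) * d)" "xt \<in> carrier_vec d"
  shows "xtraj d m N \<kappa> A B phi W nu t xt e T \<omega> \<in> carrier_vec ((N + 1) * d)"
proof -
  have "calB N d m A B *\<^sub>v uapplied d m N \<kappa> phi W nu t e T \<omega> \<in> carrier_vec ((N + 1) * d)"
    using uapplied_carrier[OF assms(1,2)] calB_carrier by (rule mult_mat_vec_carrier[rotated])
  moreover have "wstack d N W t \<omega> \<in> carrier_vec (N * d)" unfolding wstack_def by (rule vec_carrier)
  ultimately show ?thesis unfolding xtraj_def
    by (rule add_carrier_vec[OF add_carrier_vec[OF mult_mat_vec_carrier[OF calA_carrier assms(3)]]
          mult_mat_vec_carrier[OF calD_carrier]])
qed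

lemma stage_cost_convex:
  fixes A B :: "real mat" and W :: "nat \<Rightarrow> 'a \<Rightarrow> nat \<Rightarrow> real" and nu :: "nat \<Rightarrow> 'a \<Rightarrow> real"
    and phi :: "nat \<Rightarrow> real vec \<Rightarrow> real vec" and t \<kappa> :: nat and \<omega> :: 'a
  assumes Q: "sym_psd d Q" and Qf: "sym_psd d Qf" and R: "sym_pd m R" and xt: "xt \<in> carrier_vec d"
    and e1: "e1 \<in> carrier_vec (N * m)" and T1: "T1 \<in> carrier_mat (N * m) ((N - 1) * d)"
    and e2: "e2 \<in> carrier_vec (N * m)" and T2: "T2 \<in> carrier_mat (N * m) ((N - 1) * d)"
    and a: "0 \<le> a" "a \<le> 1"
  defines "J \<equiv> \<lambda>e T. qform (calQ N d Q Qf) (xtraj d m N \<kappa> A B phi W nu t xt e T \<omega>)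
                  + qform (calR N m R) (uapplied d m N \<kappa> phi W nu t e T \<omega>)"
  shows "J (a \<cdot>\<^sub>v e1 + (1 - a) \<cdot>\<^sub>v e2) (a \<cdot>\<^sub>m T1 + (1 - a) \<cdot>\<^sub>m T2) \<le> a * J e1 T1 + (1 - a) * J e2 T2"
proof -
  have "qform (calQ N d Q Qf) (xtraj d m N \<kappa> A B phi W nu t xt (a \<cdot>\<^sub>v e1 + (1 - a) \<cdot>\<^sub>v e2) (a \<cdot>\<^sub>m T1 + (1 - a) \<cdot>\<^sub>m T2) \<omega>)
      \<le> a * qform (calQ N d Q Qf) (xtraj d m N \<kappa> A B phi W nu t xt e1 T1 \<omega>)
        + (1 - a) * qform (calQ N d Q Qf) (xtraj d m N \<kappa> A B phi W nu t xt e2 T2 \<omega>)"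
    unfolding xtraj_lincomb[OF e1 e2 T1 T2 xt]
    by (rule qform_convex[OF calQ_carrier calQ_psd[OF Q Qf] xtraj_carrier[OF e1 T1 xt] xtraj_carrier[OF e2 T2 xt] a])
  moreover have "qform (calR N m R) (uapplied d m N \<kappa> phi W nu t (a \<cdot>\<^sub>v e1 + (1 - a) \<cdot>\<^sub>v e2) (a \<cdot>\<^sub>m T1 + (1 - a) \<cdot>\<^sub>m T2) \<omega>)
      \<le> a * qform (calR N m R) (uapplied d m N \<kappa> phi W nu t e1 T1 \<omega>)
        + (1 - a) * qform (calR N m R) (uapplied d m N \<kappa> phi W nu t e2 T2 \<omega>)"
    unfolding uapplied_lincomb[OF e1 e2 T1 T2]
    by (rule qform_convex[OF calR_carrier calR_psd[OF R] uapplied_carrier[OF e1 T1] uapplied_carrier[OF e2 T2] a])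
  ultimately show ?thesis unfolding J_def by (simp add: algebra_simps)
qed

lemma feasible_zero:
  assumes "0 < Umax"
  shows "feasible M d m N phi W t Umax (0\<^sub>v (N*m)) (0\<^sub>m (N*m) ((N-1)*d))"
proof -
  have F: "phistack d N phi W t \<omega> \<in> carrier_vec ((N-1)*d)" for \<omega> by (simp add: phistack_def)
  have "ucomp d N phi W t (0\<^sub>v (N*m)) (0\<^sub>m (N*m) ((N-1)*d)) \<omega> $ i = 0" if "i < N*m" for \<omega> i
    using that F[of \<omega>] by (simp add: ucomp_def)
  then show ?thesis using assms
    unfolding feasible_def decision_def theta_struct_def by (auto intro!: AE_I2)
qed

lemma feasible_convex:
  assumes z1: "feasible M d m N phi W t Umax e1 T1" and z2: "feasible M d m N phi W t Umax e2 T2"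
    and a: "0 \<le> a" "a \<le> 1"
  shows "feasible M d m N phi W t Umax (a \<cdot>\<^sub>v e1 + (1 - a) \<cdot>\<^sub>v e2) (a \<cdot>\<^sub>m T1 + (1 - a) \<cdot>\<^sub>m T2)"
proof -
  have e1: "e1 \<in> carrier_vec (N * m)" and T1: "T1 \<in> carrier_mat (N * m) ((N - 1) * d)"
    and e2: "e2 \<in> carrier_vec (N * m)" and T2: "T2 \<in> carrier_mat (N * m) ((N - 1) * d)"
    using z1 z2 unfolding feasible_def decision_def theta_struct_def by auto
  have dec: "decision d m N (a \<cdot>\<^sub>v e1 + (1 - a) \<cdot>\<^sub>v e2) (a \<cdot>\<^sub>m T1 + (1 - a) \<cdot>\<^sub>m T2)"
    using z1 z2 e1 e2 T1 T2 unfolding feasible_def decision_def theta_struct_def by auto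
  have u: "ucomp d N phi W t e T \<omega> \<in> carrier_vec (N * m)"
    if "e \<in> carrier_vec (N * m)" "T \<in> carrier_mat (N * m) ((N - 1) * d)" for e T \<omega>
    unfolding ucomp_def using that by (simp add: phistack_def)
  have "AE \<omega> in M. \<forall>i < N * m. \<bar>ucomp d N phi W t e1 T1 \<omega> $ i\<bar> \<le> Umax"
    "AE \<omega> in M. \<forall>i < N * m. \<bar>ucomp d N phi W t e2 T2 \<omega> $ i\<bar> \<le> Umax"
    using z1 z2 unfolding feasible_def by auto
  then have "AE \<omega> in M. \<forall>i < N * m.
      \<bar>ucomp d N phi W t (a \<cdot>\<^sub>v e1 + (1 - a) \<cdot>\<^sub>v e2) (a \<cdot>\<^sub>m T1 + (1 - a) \<cdot>\<^sub>m T2) \<omega> $ i\<bar> \<le> Umax"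
  proof eventually_elim
    case (elim \<omega>)
    show ?case
    proof (intro allI impI)
      fix i assume i: "i < N * m"
      have "\<bar>ucomp d N phi W t (a \<cdot>\<^sub>v e1 + (1 - a) \<cdot>\<^sub>v e2) (a \<cdot>\<^sub>m T1 + (1 - a) \<cdot>\<^sub>m T2) \<omega> $ i\<bar>
          = \<bar>a * ucomp d N phi W t e1 T1 \<omega> $ i + (1 - a) * ucomp d N phi W t e2 T2 \<omega> $ i\<bar>"
        unfolding ucomp_lincomb[OF e1 e2 T1 T2] using i u[OF e1 T1, of \<omega>] u[OF e2 T2, of \<omega>] by simp
      also have "\<dots> \<le> a * \<bar>ucomp d N phi W t e1 T1 \<omega> $ i\<bar> + (1 - a) * \<bar>ucomp d N phi W t e2 T2 \<omega> $ i\<bar>"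
        using a by (auto intro!: order_trans[OF abs_triangle_ineq] simp: abs_mult)
      also have "\<dots> \<le> Umax"
        using elim i a by (intro convex_bound_le) auto
      finally show "\<bar>ucomp d N phi W t (a \<cdot>\<^sub>v e1 + (1 - a) \<cdot>\<^sub>v e2) (a \<cdot>\<^sub>m T1 + (1 - a) \<cdot>\<^sub>m T2) \<omega> $ i\<bar> \<le> Umax" .
    qed
  qed
  then show ?thesis using dec unfolding feasible_def by simp
qed

section \<open>Entrywise expectations of random matrices\<close>

lemma mexp_carrier[simp]: "mexp M n k X \<in> carrier_mat n k"
  by (simp add: mexp_def)

lemma mexp_dims[simp]: "dim_row (mexp M n k X) = n" "dim_col (mexp M n k X) = k"
  by (simp_all add: mexp_def)

lemma mexp_index[simp]:
  "i < n \<Longrightarrow> j < k \<Longrightarrow> mexp M n k X $$ (i, j) = integral\<^sup>L M (\<lambda>\<omega>. X \<omega> $$ (i, j))"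
  by (simp add: mexp_def)

lemma (in prob_space) mexp_const: "C \<in> carrier_mat n k \<Longrightarrow> mexp M n k (\<lambda>_. C) = C"
  by (intro eq_matI) (auto simp: prob_space)

definition integrable_mat :: "'a measure \<Rightarrow> nat \<Rightarrow> nat \<Rightarrow> ('a \<Rightarrow> real mat) \<Rightarrow> bool" where
  "integrable_mat M n k P \<longleftrightarrow> (\<forall>\<omega>\<in>space M. P \<omega> \<in> carrier_mat n k) \<and>
     (\<forall>i<n. \<forall>j<k. integrable M (\<lambda>\<omega>. P \<omega> $$ (i, j)))"

lemma mexp_transpose:
  assumes "\<And>\<omega>. \<omega> \<in> space M \<Longrightarrow> P \<omega> \<in> carrier_mat n k"
  shows "mexp M k n (\<lambda>\<omega>. (P \<omega>)\<^sup>T) = (mexp M n k P)\<^sup>T"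
proof (rule eq_matI)
  fix i j assume "i < dim_row (mexp M n k P)\<^sup>T" "j < dim_col (mexp M n k P)\<^sup>T"
  then have ij: "i < k" "j < n" by auto
  have "integral\<^sup>L M (\<lambda>\<omega>. (P \<omega>)\<^sup>T $$ (i, j)) = integral\<^sup>L M (\<lambda>\<omega>. P \<omega> $$ (j, i))"
  proof (rule Bochner_Integration.integral_cong)
    fix \<omega> assume "\<omega> \<in> space M"
    then show "(P \<omega>)\<^sup>T $$ (i, j) = P \<omega> $$ (j, i)" using assms[of \<omega>] ij by auto
  qed simp
  then show "mexp M k n (\<lambda>\<omega>. (P \<omega>)\<^sup>T) $$ (i, j) = (mexp M n k P)\<^sup>T $$ (i, j)"
    using ij by simp
qed auto

lemma mexp_mult_left:
  assumes C: "C \<in> carrier_mat l n" and P: "integrable_mat M n k P"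
  shows "mexp M l k (\<lambda>\<omega>. C * P \<omega>) = C * mexp M n k P"
proof (rule eq_matI)
  fix i j assume "i < dim_row (C * mexp M n k P)" "j < dim_col (C * mexp M n k P)"
  then have ij: "i < l" "j < k" using C by auto
  have "integral\<^sup>L M (\<lambda>\<omega>. (C * P \<omega>) $$ (i, j))
      = integral\<^sup>L M (\<lambda>\<omega>. \<Sum>a<n. C $$ (i, a) * P \<omega> $$ (a, j))"
    using P ij unfolding integrable_mat_def
    by (intro Bochner_Integration.integral_cong) (auto intro: mult_mat_entry_sum[OF C])
  also have "\<dots> = (\<Sum>a<n. C $$ (i, a) * integral\<^sup>L M (\<lambda>\<omega>. P \<omega> $$ (a, j)))"
    using P ij unfolding integrable_mat_def by (subst Bochner_Integration.integral_sum) auto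
  finally show "mexp M l k (\<lambda>\<omega>. C * P \<omega>) $$ (i, j) = (C * mexp M n k P) $$ (i, j)"
    using ij by (simp add: mult_mat_entry_sum[OF C mexp_carrier])
qed (use C in auto)

lemma mexp_mult_right:
  assumes C: "C \<in> carrier_mat k l" and P: "integrable_mat M n k P"
  shows "mexp M n l (\<lambda>\<omega>. P \<omega> * C) = mexp M n k P * C"
proof (rule eq_matI)
  fix i j assume "i < dim_row (mexp M n k P * C)" "j < dim_col (mexp M n k P * C)"
  then have ij: "i < n" "j < l" using C by auto
  have "integral\<^sup>L M (\<lambda>\<omega>. (P \<omega> * C) $$ (i, j))
      = integral\<^sup>L M (\<lambda>\<omega>. \<Sum>a<k. P \<omega> $$ (i, a) * C $$ (a, j))"
    using P ij C unfolding integrable_mat_def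
    by (intro Bochner_Integration.integral_cong) (auto intro: mult_mat_entry_sum)
  also have "\<dots> = (\<Sum>a<k. integral\<^sup>L M (\<lambda>\<omega>. P \<omega> $$ (i, a)) * C $$ (a, j))"
    using P ij unfolding integrable_mat_def by (subst Bochner_Integration.integral_sum) auto
  finally show "mexp M n l (\<lambda>\<omega>. P \<omega> * C) $$ (i, j) = (mexp M n k P * C) $$ (i, j)"
    using ij by (simp add: mult_mat_entry_sum[OF mexp_carrier C])
qed (use C in auto)

lemma integral_mtrace:
  assumes "integrable_mat M n n Z"
  shows "integrable M (\<lambda>\<omega>. mtrace (Z \<omega>))"
    and "integral\<^sup>L M (\<lambda>\<omega>. mtrace (Z \<omega>)) = mtrace (mexp M n n Z)"
proof -
  have eq: "mtrace (Z \<omega>) = (\<Sum>i<n. Z \<omega> $$ (i, i))" if "\<omega> \<in> space M" for \<omega>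
    using assms that unfolding integrable_mat_def mtrace_def by auto
  have int: "integrable M (\<lambda>\<omega>. \<Sum>i<n. Z \<omega> $$ (i, i))"
    using assms unfolding integrable_mat_def by auto
  then show "integrable M (\<lambda>\<omega>. mtrace (Z \<omega>))"
    by (rule Bochner_Integration.integrable_cong[THEN iffD1, rotated 2]) (use eq in auto)
  have "integral\<^sup>L M (\<lambda>\<omega>. mtrace (Z \<omega>)) = integral\<^sup>L M (\<lambda>\<omega>. \<Sum>i<n. Z \<omega> $$ (i, i))"
    by (rule Bochner_Integration.integral_cong) (use eq in auto)
  also have "\<dots> = mtrace (mexp M n n Z)"
    using assms unfolding integrable_mat_def mtrace_def
    by (subst Bochner_Integration.integral_sum) auto
  finally show "integral\<^sup>L M (\<lambda>\<omega>. mtrace (Z \<omega>)) = mtrace (mexp M n n Z)" .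
qed

section \<open>Functions of two independent random elements\<close>

definition factors_through :: "'a measure \<Rightarrow> ('a \<Rightarrow> 'b) \<Rightarrow> 'b measure \<Rightarrow> ('a \<Rightarrow> real) \<Rightarrow> bool" where
  "factors_through M Y S f \<longleftrightarrow> (\<exists>h\<in>borel_measurable S. \<forall>\<omega>\<in>space M. f \<omega> = h (Y \<omega>))"

lemma factors_through_measurable:
  assumes "Y \<in> M \<rightarrow>\<^sub>M S" "factors_through M Y S f"
  shows "f \<in> borel_measurable M"
proof -
  obtain h where "h \<in> borel_measurable S" "\<forall>\<omega>\<in>space M. f \<omega> = h (Y \<omega>)"
    using assms(2) unfolding factors_through_def by blast
  then show ?thesis
    using measurable_comp[OF assms(1)] by (simp add: comp_def cong: measurable_cong)
qed

lemma factors_through_cong: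
  "factors_through M Y S f \<Longrightarrow> (\<And>\<omega>. \<omega> \<in> space M \<Longrightarrow> f \<omega> = g \<omega>) \<Longrightarrow> factors_through M Y S g"
  unfolding factors_through_def by simp

lemma factors_through_const: "factors_through M Y S (\<lambda>_. c)"
  unfolding factors_through_def by (intro bexI[of _ "\<lambda>_. c"]) auto

lemma factors_through_add:
  assumes "factors_through M Y S f" "factors_through M Y S g"
  shows "factors_through M Y S (\<lambda>\<omega>. f \<omega> + g \<omega>)"
proof -
  obtain h1 h2 where "h1 \<in> borel_measurable S" "\<forall>\<omega>\<in>space M. f \<omega> = h1 (Y \<omega>)"
    "h2 \<in> borel_measurable S" "\<forall>\<omega>\<in>space M. g \<omega> = h2 (Y \<omega>)"
    using assms unfolding factors_through_def by blast
  then show ?thesis unfolding factors_through_def by (intro bexI[of _ "\<lambda>y. h1 y + h2 y"]) auto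
qed

lemma factors_through_mult:
  assumes "factors_through M Y S f" "factors_through M Y S g"
  shows "factors_through M Y S (\<lambda>\<omega>. f \<omega> * g \<omega>)"
proof -
  obtain h1 h2 where "h1 \<in> borel_measurable S" "\<forall>\<omega>\<in>space M. f \<omega> = h1 (Y \<omega>)"
    "h2 \<in> borel_measurable S" "\<forall>\<omega>\<in>space M. g \<omega> = h2 (Y \<omega>)"
    using assms unfolding factors_through_def by blast
  then show ?thesis unfolding factors_through_def by (intro bexI[of _ "\<lambda>y. h1 y * h2 y"]) auto
qed

text \<open>Both random elements live in one type because \<open>indep_var\<close> requires it.\<close>

locale indep_pair = prob_space M for M :: "'a measure" +
  fixes X :: "'a \<Rightarrow> 'b" and MX :: "'b measure" and Y :: "'a \<Rightarrow> 'b" and MY :: "'b measure"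
  assumes indep_XY: "indep_var MX X MY Y"
begin

definition L2_X_fun :: "('a \<Rightarrow> real) \<Rightarrow> bool" where
  "L2_X_fun f \<longleftrightarrow> factors_through M X MX f \<and> integrable M (\<lambda>\<omega>. (f \<omega>)\<^sup>2)"

definition bounded_Y_fun :: "('a \<Rightarrow> real) \<Rightarrow> bool" where
  "bounded_Y_fun f \<longleftrightarrow> factors_through M Y MY f \<and> (\<exists>B. \<forall>\<omega>\<in>space M. \<bar>f \<omega>\<bar> \<le> B)"

lemma X_measurable: "X \<in> M \<rightarrow>\<^sub>M MX"
  using indep_var_rv1[OF indep_XY] .

lemma Y_measurable: "Y \<in> M \<rightarrow>\<^sub>M MY"
  using indep_var_rv2[OF indep_XY] .

lemma L2_X_fun_measurable: "L2_X_fun f \<Longrightarrow> f \<in> borel_measurable M"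
  unfolding L2_X_fun_def using factors_through_measurable[OF X_measurable] by blast

lemma bounded_Y_fun_measurable: "bounded_Y_fun f \<Longrightarrow> f \<in> borel_measurable M"
  unfolding bounded_Y_fun_def using factors_through_measurable[OF Y_measurable] by blast

lemma L2_X_fun_integrable: "L2_X_fun f \<Longrightarrow> integrable M f"
  using square_integrable_imp_integrable L2_X_fun_measurable unfolding L2_X_fun_def by blast

lemma bounded_Y_fun_integrable: "bounded_Y_fun f \<Longrightarrow> integrable M f"
  using bounded_Y_fun_measurable unfolding bounded_Y_fun_def
  by (metis (no_types, lifting) AE_I2 integrable_const_bound real_norm_def)

lemma L2_X_fun_integrable_mult:
  assumes f: "L2_X_fun f" and g: "L2_X_fun g"
  shows "integrable M (\<lambda>\<omega>. f \<omega> * g \<omega>)"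
proof (rule Bochner_Integration.integrable_bound)
  show "integrable M (\<lambda>\<omega>. (f \<omega>)\<^sup>2 + (g \<omega>)\<^sup>2)"
    using f g unfolding L2_X_fun_def by simp
  show "(\<lambda>\<omega>. f \<omega> * g \<omega>) \<in> borel_measurable M"
    using L2_X_fun_measurable[OF f] L2_X_fun_measurable[OF g] by simp
  have "\<bar>x * y\<bar> \<le> \<bar>x\<^sup>2 + y\<^sup>2\<bar>" for x y :: real
  proof -
    have "\<bar>x * y\<bar> \<le> 2 * (\<bar>x\<bar> * \<bar>y\<bar>)" by (simp add: abs_mult)
    also have "\<dots> \<le> x\<^sup>2 + y\<^sup>2" using sum_squares_bound[of "\<bar>x\<bar>" "\<bar>y\<bar>"] by (simp add: mult.assoc)
    finally show ?thesis by simp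
  qed
  then show "AE \<omega> in M. norm (f \<omega> * g \<omega>) \<le> norm ((f \<omega>)\<^sup>2 + (g \<omega>)\<^sup>2)"
    by simp
qed

lemma L2_X_fun_cong:
  assumes "L2_X_fun f" "\<And>\<omega>. \<omega> \<in> space M \<Longrightarrow> f \<omega> = g \<omega>"
  shows "L2_X_fun g"
proof -
  have "integrable M (\<lambda>\<omega>. (f \<omega>)\<^sup>2) = integrable M (\<lambda>\<omega>. (g \<omega>)\<^sup>2)"
    by (rule Bochner_Integration.integrable_cong) (use assms in auto)
  then show ?thesis using assms factors_through_cong unfolding L2_X_fun_def by blast
qed

lemma L2_X_fun_const: "L2_X_fun (\<lambda>_. c)"
  unfolding L2_X_fun_def by (auto intro: factors_through_const)

lemma L2_X_fun_add:
  assumes f: "L2_X_fun f" and g: "L2_X_fun g"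
  shows "L2_X_fun (\<lambda>\<omega>. f \<omega> + g \<omega>)"
proof -
  have "integrable M (\<lambda>\<omega>. (f \<omega> + g \<omega>)\<^sup>2)"
  proof (rule Bochner_Integration.integrable_bound)
    show "integrable M (\<lambda>\<omega>. 2 * (f \<omega>)\<^sup>2 + 2 * (g \<omega>)\<^sup>2)"
      using f g unfolding L2_X_fun_def by simp
    show "(\<lambda>\<omega>. (f \<omega> + g \<omega>)\<^sup>2) \<in> borel_measurable M"
      using L2_X_fun_measurable[OF f] L2_X_fun_measurable[OF g] by simp
    have "\<bar>(x + y)\<^sup>2\<bar> \<le> \<bar>2 * x\<^sup>2 + 2 * y\<^sup>2\<bar>" for x y :: real
    proof -
      have "(x + y)\<^sup>2 \<le> 2 * x\<^sup>2 + 2 * y\<^sup>2" using sum_squares_bound[of x y] by (simp add: power2_sum)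
      then show ?thesis by simp
    qed
    then show "AE \<omega> in M. norm ((f \<omega> + g \<omega>)\<^sup>2) \<le> norm (2 * (f \<omega>)\<^sup>2 + 2 * (g \<omega>)\<^sup>2)"
      by simp
  qed
  then show ?thesis using f g unfolding L2_X_fun_def by (auto intro: factors_through_add)
qed

lemma L2_X_fun_cmult: "L2_X_fun f \<Longrightarrow> L2_X_fun (\<lambda>\<omega>. c * f \<omega>)"
  unfolding L2_X_fun_def
  by (auto intro: factors_through_mult factors_through_const simp: power_mult_distrib)

lemma L2_X_fun_sum:
  "finite I \<Longrightarrow> (\<And>i. i \<in> I \<Longrightarrow> L2_X_fun (f i)) \<Longrightarrow> L2_X_fun (\<lambda>\<omega>. \<Sum>i\<in>I. f i \<omega>)"
  by (induction I rule: finite_induct) (auto intro: L2_X_fun_add L2_X_fun_const)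

lemma L2_X_fun_bounded:
  assumes "factors_through M X MX f" "\<And>\<omega>. \<omega> \<in> space M \<Longrightarrow> \<bar>f \<omega>\<bar> \<le> B"
  shows "L2_X_fun f"
proof -
  have "integrable M (\<lambda>\<omega>. (f \<omega>)\<^sup>2)"
  proof (rule integrable_const_bound[where B = "B\<^sup>2"])
    show "AE \<omega> in M. norm ((f \<omega>)\<^sup>2) \<le> B\<^sup>2"
    proof (intro AE_I2)
      fix \<omega> assume "\<omega> \<in> space M"
      then have "\<bar>f \<omega>\<bar>\<^sup>2 \<le> B\<^sup>2" using assms(2) by (intro power_mono) auto
      then show "norm ((f \<omega>)\<^sup>2) \<le> B\<^sup>2" by simp
    qed
    show "(\<lambda>\<omega>. (f \<omega>)\<^sup>2) \<in> borel_measurable M"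
      using factors_through_measurable[OF X_measurable assms(1)] by simp
  qed
  then show ?thesis using assms unfolding L2_X_fun_def by simp
qed

lemma bounded_Y_fun_cong:
  "bounded_Y_fun f \<Longrightarrow> (\<And>\<omega>. \<omega> \<in> space M \<Longrightarrow> f \<omega> = g \<omega>) \<Longrightarrow> bounded_Y_fun g"
  unfolding bounded_Y_fun_def factors_through_def by simp

lemma bounded_Y_fun_const: "bounded_Y_fun (\<lambda>_. c)"
  unfolding bounded_Y_fun_def by (auto intro: factors_through_const)

lemma bounded_Y_fun_add:
  "bounded_Y_fun f \<Longrightarrow> bounded_Y_fun g \<Longrightarrow> bounded_Y_fun (\<lambda>\<omega>. f \<omega> + g \<omega>)"
  unfolding bounded_Y_fun_def
  by (auto intro!: factors_through_add) (metis abs_triangle_ineq add_mono order_trans)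

lemma bounded_Y_fun_mult:
  assumes "bounded_Y_fun f" "bounded_Y_fun g"
  shows "bounded_Y_fun (\<lambda>\<omega>. f \<omega> * g \<omega>)"
proof -
  obtain B1 B2 where "\<forall>\<omega>\<in>space M. \<bar>f \<omega>\<bar> \<le> B1" "\<forall>\<omega>\<in>space M. \<bar>g \<omega>\<bar> \<le> B2"
    using assms unfolding bounded_Y_fun_def by blast
  then have "\<forall>\<omega>\<in>space M. \<bar>f \<omega> * g \<omega>\<bar> \<le> B1 * B2"
    by (auto simp: abs_mult intro!: mult_mono)
  then show ?thesis using assms unfolding bounded_Y_fun_def by (auto intro: factors_through_mult)
qed

lemma bounded_Y_fun_sum:
  "finite I \<Longrightarrow> (\<And>i. i \<in> I \<Longrightarrow> bounded_Y_fun (f i)) \<Longrightarrow> bounded_Y_fun (\<lambda>\<omega>. \<Sum>i\<in>I. f i \<omega>)"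
  by (induction I rule: finite_induct) (auto intro: bounded_Y_fun_add bounded_Y_fun_const)

lemma bounded_Y_fun_prod:
  "finite I \<Longrightarrow> (\<And>i. i \<in> I \<Longrightarrow> bounded_Y_fun (f i)) \<Longrightarrow> bounded_Y_fun (\<lambda>\<omega>. \<Prod>i\<in>I. f i \<omega>)"
  by (induction I rule: finite_induct) (auto intro: bounded_Y_fun_mult bounded_Y_fun_const)

lemma integral_mult_indep:
  assumes f: "bounded_Y_fun f" and g: "factors_through M X MX g" "integrable M g"
  shows "integrable M (\<lambda>\<omega>. f \<omega> * g \<omega>)"
    and "integral\<^sup>L M (\<lambda>\<omega>. f \<omega> * g \<omega>) = integral\<^sup>L M f * integral\<^sup>L M g"
proof -
  obtain hf where hf: "hf \<in> borel_measurable MY" "\<forall>\<omega>\<in>space M. f \<omega> = hf (Y \<omega>)"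
    using f unfolding bounded_Y_fun_def factors_through_def by blast
  obtain hg where hg: "hg \<in> borel_measurable MX" "\<forall>\<omega>\<in>space M. g \<omega> = hg (X \<omega>)"
    using g unfolding factors_through_def by blast
  have ind: "indep_var borel (hg \<circ> X) borel (hf \<circ> Y)"
    by (rule indep_var_compose[OF indep_XY hg(1) hf(1)])
  have ig: "integrable M (hg \<circ> X)"
    using g(2) hg(2) by (auto cong: Bochner_Integration.integrable_cong)
  have if': "integrable M (hf \<circ> Y)"
    using bounded_Y_fun_integrable[OF f] hf(2) by (auto cong: Bochner_Integration.integrable_cong)
  have fg: "\<omega> \<in> space M \<Longrightarrow> f \<omega> * g \<omega> = (hg \<circ> X) \<omega> * (hf \<circ> Y) \<omega>" for \<omega>
    using hf(2) hg(2) by simp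
  show "integrable M (\<lambda>\<omega>. f \<omega> * g \<omega>)"
    using indep_var_integrable[OF ind ig if'] fg by (auto cong: Bochner_Integration.integrable_cong)
  have "integral\<^sup>L M (\<lambda>\<omega>. f \<omega> * g \<omega>) = integral\<^sup>L M (hg \<circ> X) * integral\<^sup>L M (hf \<circ> Y)"
    using indep_var_lebesgue_integral[OF ind ig if'] fg
    by (simp cong: Bochner_Integration.integral_cong)
  also have "\<dots> = integral\<^sup>L M g * integral\<^sup>L M f"
    using hf(2) hg(2) by (simp cong: Bochner_Integration.integral_cong)
  finally show "integral\<^sup>L M (\<lambda>\<omega>. f \<omega> * g \<omega>) = integral\<^sup>L M f * integral\<^sup>L M g"
    by (simp add: mult.commute)
qed

definition L2_X_vec :: "nat \<Rightarrow> ('a \<Rightarrow> real vec) \<Rightarrow> bool" where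
  "L2_X_vec n u \<longleftrightarrow> (\<forall>\<omega>\<in>space M. u \<omega> \<in> carrier_vec n) \<and> (\<forall>i<n. L2_X_fun (\<lambda>\<omega>. u \<omega> $ i))"

definition zero_mean_vec :: "nat \<Rightarrow> ('a \<Rightarrow> real vec) \<Rightarrow> bool" where
  "zero_mean_vec n u \<longleftrightarrow> (\<forall>i<n. integral\<^sup>L M (\<lambda>\<omega>. u \<omega> $ i) = 0)"

definition bounded_Y_mat :: "nat \<Rightarrow> nat \<Rightarrow> ('a \<Rightarrow> real mat) \<Rightarrow> bool" where
  "bounded_Y_mat n k P \<longleftrightarrow> (\<forall>\<omega>\<in>space M. P \<omega> \<in> carrier_mat n k) \<and>
     (\<forall>i<n. \<forall>j<k. bounded_Y_fun (\<lambda>\<omega>. P \<omega> $$ (i, j)))"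

lemma bounded_Y_mat_integrable: "bounded_Y_mat n k P \<Longrightarrow> integrable_mat M n k P"
  unfolding bounded_Y_mat_def integrable_mat_def using bounded_Y_fun_integrable by blast

lemma bounded_Y_mat_const: "C \<in> carrier_mat n k \<Longrightarrow> bounded_Y_mat n k (\<lambda>_. C)"
  unfolding bounded_Y_mat_def by (auto intro: bounded_Y_fun_const)

lemma bounded_Y_mat_mult:
  assumes "bounded_Y_mat n k P" "bounded_Y_mat k l P'"
  shows "bounded_Y_mat n l (\<lambda>\<omega>. P \<omega> * P' \<omega>)"
  unfolding bounded_Y_mat_def
proof (intro conjI allI impI ballI)
  fix \<omega> assume "\<omega> \<in> space M"
  then show "P \<omega> * P' \<omega> \<in> carrier_mat n l" using assms unfolding bounded_Y_mat_def by auto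
next
  fix i j assume ij: "i < n" "j < l"
  have "bounded_Y_fun (\<lambda>\<omega>. \<Sum>a<k. P \<omega> $$ (i, a) * P' \<omega> $$ (a, j))"
    using assms ij unfolding bounded_Y_mat_def by (intro bounded_Y_fun_sum bounded_Y_fun_mult) auto
  then show "bounded_Y_fun (\<lambda>\<omega>. (P \<omega> * P' \<omega>) $$ (i, j))"
  proof (rule bounded_Y_fun_cong)
    fix \<omega> assume "\<omega> \<in> space M"
    then have "P \<omega> \<in> carrier_mat n k" "P' \<omega> \<in> carrier_mat k l"
      using assms unfolding bounded_Y_mat_def by auto
    then show "(\<Sum>a<k. P \<omega> $$ (i, a) * P' \<omega> $$ (a, j)) = (P \<omega> * P' \<omega>) $$ (i, j)"
      by (rule mult_mat_entry_sum[symmetric]) (use ij in auto)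
  qed
qed

lemma bounded_Y_mat_transpose:
  assumes "bounded_Y_mat n k P"
  shows "bounded_Y_mat k n (\<lambda>\<omega>. (P \<omega>)\<^sup>T)"
  unfolding bounded_Y_mat_def
proof (intro conjI allI impI ballI)
  fix \<omega> assume "\<omega> \<in> space M"
  then show "(P \<omega>)\<^sup>T \<in> carrier_mat k n" using assms unfolding bounded_Y_mat_def by auto
next
  fix i j assume ij: "i < k" "j < n"
  show "bounded_Y_fun (\<lambda>\<omega>. (P \<omega>)\<^sup>T $$ (i, j))"
    by (rule bounded_Y_fun_cong[of "\<lambda>\<omega>. P \<omega> $$ (j, i)"])
      (use assms ij in \<open>auto simp: bounded_Y_mat_def\<close>)
qed

lemma L2_X_vec_const: "c \<in> carrier_vec n \<Longrightarrow> L2_X_vec n (\<lambda>_. c)"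
  unfolding L2_X_vec_def by (auto intro: L2_X_fun_const)

lemma L2_X_vec_mult_mat:
  assumes C: "C \<in> carrier_mat n k" and u: "L2_X_vec k u"
  shows "L2_X_vec n (\<lambda>\<omega>. C *\<^sub>v u \<omega>)"
  unfolding L2_X_vec_def
proof (intro conjI allI impI ballI)
  fix \<omega> assume "\<omega> \<in> space M"
  then show "C *\<^sub>v u \<omega> \<in> carrier_vec n" using C u unfolding L2_X_vec_def by auto
next
  fix i assume i: "i < n"
  have "L2_X_fun (\<lambda>\<omega>. \<Sum>a<k. C $$ (i, a) * u \<omega> $ a)"
    using u unfolding L2_X_vec_def by (intro L2_X_fun_sum L2_X_fun_cmult) auto
  then show "L2_X_fun (\<lambda>\<omega>. (C *\<^sub>v u \<omega>) $ i)"
  proof (rule L2_X_fun_cong)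
    fix \<omega> assume "\<omega> \<in> space M"
    then have "u \<omega> \<in> carrier_vec k" using u unfolding L2_X_vec_def by auto
    then show "(\<Sum>a<k. C $$ (i, a) * u \<omega> $ a) = (C *\<^sub>v u \<omega>) $ i"
      by (rule mult_mat_vec_entry_sum[OF C _ i, symmetric])
  qed
qed

lemma zero_mean_vec_mult_mat:
  assumes C: "C \<in> carrier_mat n k" and u: "L2_X_vec k u" "zero_mean_vec k u"
  shows "zero_mean_vec n (\<lambda>\<omega>. C *\<^sub>v u \<omega>)"
  unfolding zero_mean_vec_def
proof (intro allI impI)
  fix i assume i: "i < n"
  have "integral\<^sup>L M (\<lambda>\<omega>. (C *\<^sub>v u \<omega>) $ i) = integral\<^sup>L M (\<lambda>\<omega>. \<Sum>a<k. C $$ (i, a) * u \<omega> $ a)"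
  proof (rule Bochner_Integration.integral_cong)
    fix \<omega> assume "\<omega> \<in> space M"
    then have "u \<omega> \<in> carrier_vec k" using u unfolding L2_X_vec_def by auto
    then show "(C *\<^sub>v u \<omega>) $ i = (\<Sum>a<k. C $$ (i, a) * u \<omega> $ a)"
      by (rule mult_mat_vec_entry_sum[OF C _ i])
  qed simp
  also have "\<dots> = (\<Sum>a<k. C $$ (i, a) * integral\<^sup>L M (\<lambda>\<omega>. u \<omega> $ a))"
    using u L2_X_fun_integrable unfolding L2_X_vec_def
    by (subst Bochner_Integration.integral_sum) auto
  also have "\<dots> = 0" using u unfolding zero_mean_vec_def by simp
  finally show "integral\<^sup>L M (\<lambda>\<omega>. (C *\<^sub>v u \<omega>) $ i) = 0" .
qed

lemma outer_L2_X_vec: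
  assumes v: "L2_X_vec k v" and u: "L2_X_vec n u"
  shows "integrable_mat M k n (\<lambda>\<omega>. outer (v \<omega>) (u \<omega>))"
    and "\<And>i j. i < k \<Longrightarrow> j < n \<Longrightarrow> factors_through M X MX (\<lambda>\<omega>. outer (v \<omega>) (u \<omega>) $$ (i, j))"
proof -
  have entry: "outer (v \<omega>) (u \<omega>) $$ (i, j) = v \<omega> $ i * u \<omega> $ j"
    if "\<omega> \<in> space M" "i < k" "j < n" for \<omega> i j
  proof -
    have "dim_vec (v \<omega>) = k" "dim_vec (u \<omega>) = n" using u v that unfolding L2_X_vec_def by auto
    then show ?thesis using that by (simp add: outer_def)
  qed
  show "integrable_mat M k n (\<lambda>\<omega>. outer (v \<omega>) (u \<omega>))"
    unfolding integrable_mat_def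
  proof (intro conjI allI impI ballI)
    fix \<omega> assume "\<omega> \<in> space M"
    then show "outer (v \<omega>) (u \<omega>) \<in> carrier_mat k n"
      using u v unfolding L2_X_vec_def by (auto simp: outer_def)
  next
    fix i j assume ij: "i < k" "j < n"
    have "integrable M (\<lambda>\<omega>. v \<omega> $ i * u \<omega> $ j)"
      using u v ij unfolding L2_X_vec_def by (auto intro: L2_X_fun_integrable_mult)
    then show "integrable M (\<lambda>\<omega>. outer (v \<omega>) (u \<omega>) $$ (i, j))"
      using entry ij by (auto cong: Bochner_Integration.integrable_cong)
  qed
  fix i j assume ij: "i < k" "j < n"
  have "factors_through M X MX (\<lambda>\<omega>. v \<omega> $ i * u \<omega> $ j)"
    using u v ij unfolding L2_X_vec_def L2_X_fun_def by (auto intro: factors_through_mult)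
  then show "factors_through M X MX (\<lambda>\<omega>. outer (v \<omega>) (u \<omega>) $$ (i, j))"
    by (rule factors_through_cong) (use entry ij in auto)
qed

lemma mexp_mult_indep:
  assumes P: "bounded_Y_mat n k P" and Z: "integrable_mat M k l Z"
    and Z_X: "\<And>i j. i < k \<Longrightarrow> j < l \<Longrightarrow> factors_through M X MX (\<lambda>\<omega>. Z \<omega> $$ (i, j))"
  shows "integrable_mat M n l (\<lambda>\<omega>. P \<omega> * Z \<omega>)"
    and "mexp M n l (\<lambda>\<omega>. P \<omega> * Z \<omega>) = mexp M n k P * mexp M k l Z"
proof -
  have entry: "(P \<omega> * Z \<omega>) $$ (i, j) = (\<Sum>a<k. P \<omega> $$ (i, a) * Z \<omega> $$ (a, j))"
    if "\<omega> \<in> space M" "i < n" "j < l" for \<omega> i j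
    using P Z that unfolding bounded_Y_mat_def integrable_mat_def
    by (intro mult_mat_entry_sum) auto
  have prod: "integrable M (\<lambda>\<omega>. P \<omega> $$ (i, a) * Z \<omega> $$ (a, j)) \<and>
      integral\<^sup>L M (\<lambda>\<omega>. P \<omega> $$ (i, a) * Z \<omega> $$ (a, j))
      = integral\<^sup>L M (\<lambda>\<omega>. P \<omega> $$ (i, a)) * integral\<^sup>L M (\<lambda>\<omega>. Z \<omega> $$ (a, j))"
    if "i < n" "a < k" "j < l" for i a j
    using integral_mult_indep[of "\<lambda>\<omega>. P \<omega> $$ (i, a)" "\<lambda>\<omega>. Z \<omega> $$ (a, j)"] P Z Z_X that
    unfolding bounded_Y_mat_def integrable_mat_def by auto
  show "integrable_mat M n l (\<lambda>\<omega>. P \<omega> * Z \<omega>)"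
    unfolding integrable_mat_def
  proof (intro conjI allI impI ballI)
    fix \<omega> assume "\<omega> \<in> space M"
    then show "P \<omega> * Z \<omega> \<in> carrier_mat n l"
      using P Z unfolding bounded_Y_mat_def integrable_mat_def by auto
  next
    fix i j assume ij: "i < n" "j < l"
    have "integrable M (\<lambda>\<omega>. \<Sum>a<k. P \<omega> $$ (i, a) * Z \<omega> $$ (a, j))"
      using prod ij by auto
    then show "integrable M (\<lambda>\<omega>. (P \<omega> * Z \<omega>) $$ (i, j))"
      using entry ij by (auto cong: Bochner_Integration.integrable_cong)
  qed
  show "mexp M n l (\<lambda>\<omega>. P \<omega> * Z \<omega>) = mexp M n k P * mexp M k l Z"
  proof (rule eq_matI)
    fix i j assume "i < dim_row (mexp M n k P * mexp M k l Z)" "j < dim_col (mexp M n k P * mexp M k l Z)"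
    then have ij: "i < n" "j < l" by auto
    have "integral\<^sup>L M (\<lambda>\<omega>. (P \<omega> * Z \<omega>) $$ (i, j))
        = integral\<^sup>L M (\<lambda>\<omega>. \<Sum>a<k. P \<omega> $$ (i, a) * Z \<omega> $$ (a, j))"
      using entry ij by (auto cong: Bochner_Integration.integral_cong)
    also have "\<dots> = (\<Sum>a<k. integral\<^sup>L M (\<lambda>\<omega>. P \<omega> $$ (i, a)) * integral\<^sup>L M (\<lambda>\<omega>. Z \<omega> $$ (a, j)))"
      using prod ij by (subst Bochner_Integration.integral_sum) auto
    finally show "mexp M n l (\<lambda>\<omega>. P \<omega> * Z \<omega>) $$ (i, j) = (mexp M n k P * mexp M k l Z) $$ (i, j)"
      using ij by (subst mult_mat_entry_sum[OF mexp_carrier mexp_carrier]) auto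
  qed auto
qed

lemma integral_scalar_prod_indep:
  assumes P: "bounded_Y_mat n k P" and u: "L2_X_vec n u" and v: "L2_X_vec k v"
  shows "integrable M (\<lambda>\<omega>. u \<omega> \<bullet> (P \<omega> *\<^sub>v v \<omega>))"
    and "integral\<^sup>L M (\<lambda>\<omega>. u \<omega> \<bullet> (P \<omega> *\<^sub>v v \<omega>))
       = mtrace (mexp M n k P * mexp M k n (\<lambda>\<omega>. outer (v \<omega>) (u \<omega>)))"
proof -
  note PZ = mexp_mult_indep[OF P outer_L2_X_vec[OF v u]]
  have eq: "u \<omega> \<bullet> (P \<omega> *\<^sub>v v \<omega>) = mtrace (P \<omega> * outer (v \<omega>) (u \<omega>))" if "\<omega> \<in> space M" for \<omega>
  proof -
    have "P \<omega> \<in> carrier_mat n k" "v \<omega> \<in> carrier_vec k" "u \<omega> \<in> carrier_vec n"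
      using P u v that unfolding bounded_Y_mat_def L2_X_vec_def by auto
    then show ?thesis by (simp add: mtrace_mult_outer)
  qed
  show "integrable M (\<lambda>\<omega>. u \<omega> \<bullet> (P \<omega> *\<^sub>v v \<omega>))"
    using integral_mtrace(1)[OF PZ(1)] eq by (auto cong: Bochner_Integration.integrable_cong)
  show "integral\<^sup>L M (\<lambda>\<omega>. u \<omega> \<bullet> (P \<omega> *\<^sub>v v \<omega>))
       = mtrace (mexp M n k P * mexp M k n (\<lambda>\<omega>. outer (v \<omega>) (u \<omega>)))"
    using integral_mtrace(2)[OF PZ(1)] eq PZ(2) by (simp cong: Bochner_Integration.integral_cong)
qed

lemma mexp_outer_zero_mean_left:
  assumes v: "L2_X_vec k v" "zero_mean_vec k v" and c: "c \<in> carrier_vec n"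
  shows "mexp M k n (\<lambda>\<omega>. outer (v \<omega>) c) = 0\<^sub>m k n"
proof (rule eq_matI)
  fix i j assume "i < dim_row (0\<^sub>m k n :: real mat)" "j < dim_col (0\<^sub>m k n :: real mat)"
  then have ij: "i < k" "j < n" by auto
  have "integral\<^sup>L M (\<lambda>\<omega>. outer (v \<omega>) c $$ (i, j)) = integral\<^sup>L M (\<lambda>\<omega>. v \<omega> $ i * c $ j)"
  proof (rule Bochner_Integration.integral_cong)
    fix \<omega> assume "\<omega> \<in> space M"
    then have "dim_vec (v \<omega>) = k" using v unfolding L2_X_vec_def by auto
    then show "outer (v \<omega>) c $$ (i, j) = v \<omega> $ i * c $ j" using c ij by (simp add: outer_def)
  qed simp
  also have "\<dots> = 0" using v ij unfolding zero_mean_vec_def by simp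
  finally show "mexp M k n (\<lambda>\<omega>. outer (v \<omega>) c) $$ (i, j) = 0\<^sub>m k n $$ (i, j)" using ij by simp
qed auto

lemma mexp_outer_zero_mean_right:
  assumes v: "L2_X_vec k v" "zero_mean_vec k v" and c: "c \<in> carrier_vec n"
  shows "mexp M n k (\<lambda>\<omega>. outer c (v \<omega>)) = 0\<^sub>m n k"
proof (rule eq_matI)
  fix i j assume "i < dim_row (0\<^sub>m n k :: real mat)" "j < dim_col (0\<^sub>m n k :: real mat)"
  then have ij: "i < n" "j < k" by auto
  have "integral\<^sup>L M (\<lambda>\<omega>. outer c (v \<omega>) $$ (i, j)) = integral\<^sup>L M (\<lambda>\<omega>. c $ i * v \<omega> $ j)"
  proof (rule Bochner_Integration.integral_cong)
    fix \<omega> assume "\<omega> \<in> space M"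
    then have "dim_vec (v \<omega>) = k" using v unfolding L2_X_vec_def by auto
    then show "outer c (v \<omega>) $$ (i, j) = c $ i * v \<omega> $ j" using c ij by (simp add: outer_def)
  qed simp
  also have "\<dots> = 0" using v ij unfolding zero_mean_vec_def by simp
  finally show "mexp M n k (\<lambda>\<omega>. outer c (v \<omega>)) $$ (i, j) = 0\<^sub>m n k $$ (i, j)" using ij by simp
qed auto

lemma integral_scalar_prod_const:
  assumes P: "bounded_Y_mat n k P" and a: "a \<in> carrier_vec n" and b: "b \<in> carrier_vec k"
  shows "integral\<^sup>L M (\<lambda>\<omega>. a \<bullet> (P \<omega> *\<^sub>v b)) = a \<bullet> (mexp M n k P *\<^sub>v b)"
proof -
  have "outer b a \<in> carrier_mat k n" using a b by (simp add: outer_def)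
  then show ?thesis
    using integral_scalar_prod_indep(2)[OF P L2_X_vec_const[OF a] L2_X_vec_const[OF b]] a b
    by (simp add: mexp_const mtrace_mult_outer[OF mexp_carrier b a])
qed

lemma integral_scalar_prod_zero_mean_right:
  assumes P: "bounded_Y_mat n k P" and c: "c \<in> carrier_vec n"
    and v: "L2_X_vec k v" "zero_mean_vec k v"
  shows "integral\<^sup>L M (\<lambda>\<omega>. c \<bullet> (P \<omega> *\<^sub>v v \<omega>)) = 0"
  using integral_scalar_prod_indep(2)[OF P L2_X_vec_const[OF c] v(1)]
  by (simp add: mexp_outer_zero_mean_left[OF v c] mtrace_def)

lemma integral_scalar_prod_zero_mean_left:
  assumes P: "bounded_Y_mat n k P" and c: "c \<in> carrier_vec k"
    and v: "L2_X_vec n v" "zero_mean_vec n v"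
  shows "integral\<^sup>L M (\<lambda>\<omega>. v \<omega> \<bullet> (P \<omega> *\<^sub>v c)) = 0"
  using integral_scalar_prod_indep(2)[OF P v(1) L2_X_vec_const[OF c]]
  by (simp add: mexp_outer_zero_mean_right[OF v c] mtrace_def)

end

section \<open>The TP3 model\<close>

locale tp3_model =
  fixes M :: "'a measure" and d N :: nat and W :: "nat \<Rightarrow> 'a \<Rightarrow> nat \<Rightarrow> real"
    and nu :: "nat \<Rightarrow> 'a \<Rightarrow> real" and phi :: "nat \<Rightarrow> real vec \<Rightarrow> real vec" and phimax :: real
  assumes prob: "prob_space M"
    and noise_channel_indep: "prob_space.indep_var M
       (PiM UNIV (\<lambda>_. Rd d)) (\<lambda>\<omega> s. wrv d W s \<omega>)
       (PiM UNIV (\<lambda>_. PiM UNIV (\<lambda>_. borel))) (\<lambda>\<omega> s (_::nat). nu s \<omega>)"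
    and w_mean: "\<And>s j. j < d \<Longrightarrow>
       integrable M (\<lambda>\<omega>. W s \<omega> j) \<and> integral\<^sup>L M (\<lambda>\<omega>. W s \<omega> j) = 0"
    and w_4th: "\<And>s j. j < d \<Longrightarrow> integrable M (\<lambda>\<omega>. (W s \<omega> j) ^ 4)"
    and nu_01: "\<And>s \<omega>. nu s \<omega> \<in> {0, 1}"
    and phi_meas: "\<And>i. 1 \<le> i \<Longrightarrow> i \<le> N - 1 \<Longrightarrow>
       (\<lambda>v. restrict (\<lambda>j. phi i (vec d v) $ j) {..<d}) \<in> Rd d \<rightarrow>\<^sub>M Rd d"
    and phi_bound: "\<And>i v j. 1 \<le> i \<Longrightarrow> i \<le> N - 1 \<Longrightarrow> v \<in> carrier_vec d \<Longrightarrow> j < d \<Longrightarrow>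
       \<bar>phi i v $ j\<bar> \<le> phimax"
    and phi_mean: "\<And>i s j. 1 \<le> i \<Longrightarrow> i \<le> N - 1 \<Longrightarrow> j < d \<Longrightarrow>
       integral\<^sup>L M (\<lambda>\<omega>. phi i (wvec d W s \<omega>) $ j) = 0"

text \<open>The shapes of the two paths, including the dummy argument of \<open>dropout_path\<close>, are those of
  the independence hypothesis of the theorem.\<close>

context tp3_model
begin

abbreviation "noise_path \<equiv> \<lambda>\<omega> s. wrv d W s \<omega>"
abbreviation "noise_space \<equiv> PiM UNIV (\<lambda>_::nat. Rd d)"
abbreviation "dropout_path \<equiv> \<lambda>\<omega> s (_::nat). nu s \<omega>"
abbreviation "dropout_space \<equiv> PiM UNIV (\<lambda>_::nat. PiM UNIV (\<lambda>_::nat. borel :: real measure))"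

end

sublocale tp3_model \<subseteq> indep_pair M noise_path noise_space dropout_path dropout_space
  by (intro indep_pair.intro indep_pair_axioms.intro prob noise_channel_indep)

context tp3_model
begin

lemma phistack_index:
  assumes "k < (N - 1) * d"
  shows "k mod d < d" "1 \<le> k div d + 1" "k div d + 1 \<le> N - 1"
  using assms by (cases "d = 0"; auto simp: less_mult_imp_div_less Suc_leI)+

lemma factors_through_noise:
  assumes j: "j < d"
  shows "factors_through M noise_path noise_space (\<lambda>\<omega>. W s \<omega> j)"
  unfolding factors_through_def
proof (intro bexI[of _ "\<lambda>y. y s j"] ballI)
  have s: "(\<lambda>y. y s) \<in> noise_space \<rightarrow>\<^sub>M Rd d" by (rule measurable_component_singleton) simp
  have j: "(\<lambda>v. v j) \<in> Rd d \<rightarrow>\<^sub>M borel"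
    unfolding Rd_def using j by (intro measurable_component_singleton) simp
  show "(\<lambda>y. y s j) \<in> borel_measurable noise_space"
    using measurable_comp[OF s j] by (simp add: comp_def)
qed (use j in \<open>simp add: wrv_def\<close>)

lemma factors_through_phi:
  assumes i: "1 \<le> i" "i \<le> N - 1" and j: "j < d"
  shows "factors_through M noise_path noise_space (\<lambda>\<omega>. phi i (wvec d W s \<omega>) $ j)"
  unfolding factors_through_def
proof (intro bexI[of _ "\<lambda>y. restrict (\<lambda>j. phi i (vec d (y s)) $ j) {..<d} j"] ballI)
  have s: "(\<lambda>y. y s) \<in> noise_space \<rightarrow>\<^sub>M Rd d" by (rule measurable_component_singleton) simp
  have j': "(\<lambda>v. v j) \<in> Rd d \<rightarrow>\<^sub>M borel"
    unfolding Rd_def using j by (intro measurable_component_singleton) simp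
  show "(\<lambda>y. restrict (\<lambda>j. phi i (vec d (y s)) $ j) {..<d} j) \<in> borel_measurable noise_space"
    using measurable_comp[OF measurable_comp[OF s phi_meas[OF i]] j'] by (simp add: comp_def)
  fix \<omega>
  have "vec d (restrict (W s \<omega>) {..<d}) = vec d (W s \<omega>)" by (intro eq_vecI) auto
  then show "phi i (wvec d W s \<omega>) $ j = restrict (\<lambda>j. phi i (vec d (wrv d W s \<omega>)) $ j) {..<d} j"
    using j by (simp add: wrv_def wvec_def)
qed

lemma L2_X_fun_noise:
  assumes j: "j < d"
  shows "L2_X_fun (\<lambda>\<omega>. W s \<omega> j)"
proof -
  have "(\<lambda>\<omega>. (W s \<omega> j)\<^sup>2) \<in> borel_measurable M"
    using factors_through_measurable[OF X_measurable factors_through_noise[OF j]] by simp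
  moreover have "integrable M (\<lambda>\<omega>. ((W s \<omega> j)\<^sup>2)\<^sup>2)"
    using w_4th[OF j] by (simp add: power_mult[symmetric])
  ultimately have "integrable M (\<lambda>\<omega>. (W s \<omega> j)\<^sup>2)"
    by (rule square_integrable_imp_integrable)
  then show ?thesis using factors_through_noise[OF j] unfolding L2_X_fun_def by simp
qed

lemma bounded_Y_fun_nu: "bounded_Y_fun (\<lambda>\<omega>. nu s \<omega>)"
proof -
  have s: "(\<lambda>y. y s) \<in> dropout_space \<rightarrow>\<^sub>M PiM UNIV (\<lambda>_::nat. borel :: real measure)"
    by (rule measurable_component_singleton) simp
  have zero: "(\<lambda>v. v (0::nat)) \<in> PiM UNIV (\<lambda>_::nat. borel :: real measure) \<rightarrow>\<^sub>M borel"
    by (rule measurable_component_singleton) simp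
  have "(\<lambda>y. y s 0) \<in> borel_measurable dropout_space"
    using measurable_comp[OF s zero] by (simp add: comp_def)
  then have "factors_through M dropout_path dropout_space (\<lambda>\<omega>. nu s \<omega>)"
    unfolding factors_through_def by (intro bexI[of _ "\<lambda>y. y s 0"]) auto
  moreover have "\<bar>nu s \<omega>\<bar> \<le> 1" for \<omega> using nu_01[of s \<omega>] by auto
  ultimately show ?thesis unfolding bounded_Y_fun_def by blast
qed

lemma bounded_Y_fun_rho: "bounded_Y_fun (\<lambda>\<omega>. rho nu t l \<omega>)"
proof (induction l)
  case 0
  then show ?case by (simp add: bounded_Y_fun_nu)
next
  case (Suc l)
  have "bounded_Y_fun (\<lambda>\<omega>. 1 - nu s \<omega>)" for s
    using bounded_Y_fun_add[OF bounded_Y_fun_const bounded_Y_fun_mult[OF bounded_Y_fun_const bounded_Y_fun_nu],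
        of 1 "-1" s]
    by simp
  then have "bounded_Y_fun (\<lambda>\<omega>. \<Prod>s\<le>l. 1 - nu (t + s) \<omega>)"
    by (intro bounded_Y_fun_prod) auto
  then show ?case
    unfolding rho.simps by (rule bounded_Y_fun_add[OF Suc.IH bounded_Y_fun_mult[OF _ bounded_Y_fun_nu]])
qed

lemma bounded_Y_mat_Smat: "bounded_Y_mat (N * m) (N * m) (Smat m N \<kappa> nu t)"
  unfolding bounded_Y_mat_def
proof (intro conjI allI impI ballI)
  fix i j assume ij: "i < N * m" "j < N * m"
  show "bounded_Y_fun (\<lambda>\<omega>. Smat m N \<kappa> nu t \<omega> $$ (i, j))"
  proof (cases "i = j \<and> i div m < \<kappa>")
    case True
    show ?thesis
      by (rule bounded_Y_fun_cong[OF bounded_Y_fun_nu[of "t + i div m"]])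
        (use ij True in \<open>auto simp add: Smat_def\<close>)
  next
    case False
    show ?thesis
      by (rule bounded_Y_fun_cong[OF bounded_Y_fun_const[of "if i = j then 1 else 0"]])
        (use ij False in \<open>simp add: Smat_def\<close>)
  qed
qed (simp add: Smat_def)

lemma bounded_Y_mat_Gmat: "bounded_Y_mat (N * m) (N * m) (Gmat m N \<kappa> nu t)"
  unfolding bounded_Y_mat_def
proof (intro conjI allI impI ballI)
  fix i j assume ij: "i < N * m" "j < N * m"
  show "bounded_Y_fun (\<lambda>\<omega>. Gmat m N \<kappa> nu t \<omega> $$ (i, j))"
  proof (cases "i = j \<and> i div m < \<kappa>")
    case True
    show ?thesis
      by (rule bounded_Y_fun_cong[OF bounded_Y_fun_rho[of t "i div m"]])
        (use ij True in \<open>auto simp add: Gmat_def\<close>)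
  next
    case False
    show ?thesis
      by (rule bounded_Y_fun_cong[OF bounded_Y_fun_const[of "if i = j then 1 else 0"]])
        (use ij False in \<open>simp add: Gmat_def\<close>)
  qed
qed (simp add: Gmat_def)

lemma L2_X_vec_wstack: "L2_X_vec (N * d) (wstack d N W t)"
  unfolding L2_X_vec_def
proof (intro conjI allI impI ballI)
  fix i assume i: "i < N * d"
  then have "i mod d < d" by (cases "d = 0") auto
  then show "L2_X_fun (\<lambda>\<omega>. wstack d N W t \<omega> $ i)"
    by (rule L2_X_fun_cong[OF L2_X_fun_noise]) (use i in \<open>simp add: wstack_def\<close>)
qed (simp add: wstack_def)

lemma zero_mean_vec_wstack: "zero_mean_vec (N * d) (wstack d N W t)"
  unfolding zero_mean_vec_def
proof (intro allI impI)
  fix i assume i: "i < N * d"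
  then have "i mod d < d" by (cases "d = 0") auto
  then show "integral\<^sup>L M (\<lambda>\<omega>. wstack d N W t \<omega> $ i) = 0"
    using w_mean i by (simp add: wstack_def)
qed

lemma phistack_bound: "k < (N - 1) * d \<Longrightarrow> \<bar>phistack d N phi W t \<omega> $ k\<bar> \<le> phimax"
  using phi_bound[OF phistack_index(2,3) _ phistack_index(1), of k "wvec d W (t + k div d) \<omega>"]
  by (simp add: phistack_def wvec_def)

lemma L2_X_vec_phistack: "L2_X_vec ((N - 1) * d) (phistack d N phi W t)"
  unfolding L2_X_vec_def
proof (intro conjI allI impI ballI)
  fix i assume i: "i < (N - 1) * d"
  have "L2_X_fun (\<lambda>\<omega>. phi (i div d + 1) (wvec d W (t + i div d) \<omega>) $ (i mod d))"
    by (rule L2_X_fun_bounded[OF factors_through_phi[OF phistack_index(2,3,1)[OF i]], where B = phimax])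
      (use phistack_bound[OF i, of t] i in \<open>simp add: phistack_def\<close>)
  then show "L2_X_fun (\<lambda>\<omega>. phistack d N phi W t \<omega> $ i)"
    by (rule L2_X_fun_cong) (use i in \<open>simp add: phistack_def\<close>)
qed (simp add: phistack_def)

lemma zero_mean_vec_phistack: "zero_mean_vec ((N - 1) * d) (phistack d N phi W t)"
  unfolding zero_mean_vec_def
  using phi_mean[OF phistack_index(2,3) phistack_index(1)] by (simp add: phistack_def)

lemma stage_cost_terms_integrable:
  fixes P2 P3 C4 K MM Th :: "real mat" and xt eta :: "real vec" and n m \<kappa> t :: nat
  assumes P2: "P2 \<in> carrier_mat (N * d) (N * d)" and P3: "P3 \<in> carrier_mat n (N * d)"
    and C4: "C4 \<in> carrier_mat n (N * m)" and K: "K \<in> carrier_mat (N * m) (N * d)"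
    and MM: "MM \<in> carrier_mat (N * m) (N * m)" and Th: "Th \<in> carrier_mat (N * m) ((N - 1) * d)"
    and xt: "xt \<in> carrier_vec n" and eta: "eta \<in> carrier_vec (N * m)"
  defines "X \<equiv> wstack d N W t" and "f \<equiv> \<lambda>\<omega>. Th *\<^sub>v phistack d N phi W t \<omega>"
    and "G \<equiv> Gmat m N \<kappa> nu t" and "S \<equiv> Smat m N \<kappa> nu t"
  shows "integrable M (\<lambda>\<omega>. X \<omega> \<bullet> (P2 *\<^sub>v X \<omega>))"
    "integrable M (\<lambda>\<omega>. xt \<bullet> (P3 *\<^sub>v X \<omega>))"
    "integrable M (\<lambda>\<omega>. xt \<bullet> ((C4 * G \<omega>) *\<^sub>v eta))"
    "integrable M (\<lambda>\<omega>. xt \<bullet> ((C4 * S \<omega>) *\<^sub>v f \<omega>))"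
    "integrable M (\<lambda>\<omega>. eta \<bullet> (((G \<omega>)\<^sup>T * K) *\<^sub>v X \<omega>))"
    "integrable M (\<lambda>\<omega>. f \<omega> \<bullet> (((S \<omega>)\<^sup>T * K) *\<^sub>v X \<omega>))"
    "integrable M (\<lambda>\<omega>. eta \<bullet> (((G \<omega>)\<^sup>T * MM * G \<omega>) *\<^sub>v eta))"
    "integrable M (\<lambda>\<omega>. eta \<bullet> (((G \<omega>)\<^sup>T * MM * S \<omega>) *\<^sub>v f \<omega>))"
    "integrable M (\<lambda>\<omega>. f \<omega> \<bullet> (((S \<omega>)\<^sup>T * MM * G \<omega>) *\<^sub>v eta))"
    "integrable M (\<lambda>\<omega>. f \<omega> \<bullet> (((S \<omega>)\<^sup>T * MM * S \<omega>) *\<^sub>v f \<omega>))"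
proof -
  note G = bounded_Y_mat_Gmat[of m \<kappa> t, folded G_def]
    and S = bounded_Y_mat_Smat[of m \<kappa> t, folded S_def]
    and X = L2_X_vec_wstack[of t, folded X_def]
    and f = L2_X_vec_mult_mat[OF Th L2_X_vec_phistack, of t, folded f_def]
    and xt = L2_X_vec_const[OF xt] and eta = L2_X_vec_const[OF eta]
  note const = bounded_Y_mat_const and mult = bounded_Y_mat_mult and tr = bounded_Y_mat_transpose
  show "integrable M (\<lambda>\<omega>. X \<omega> \<bullet> (P2 *\<^sub>v X \<omega>))"
    by (rule integral_scalar_prod_indep(1)[OF const[OF P2] X X])
  show "integrable M (\<lambda>\<omega>. xt \<bullet> (P3 *\<^sub>v X \<omega>))"
    by (rule integral_scalar_prod_indep(1)[OF const[OF P3] xt X])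
  show "integrable M (\<lambda>\<omega>. xt \<bullet> ((C4 * G \<omega>) *\<^sub>v eta))"
    by (rule integral_scalar_prod_indep(1)[OF mult[OF const[OF C4] G] xt eta])
  show "integrable M (\<lambda>\<omega>. xt \<bullet> ((C4 * S \<omega>) *\<^sub>v f \<omega>))"
    by (rule integral_scalar_prod_indep(1)[OF mult[OF const[OF C4] S] xt f])
  show "integrable M (\<lambda>\<omega>. eta \<bullet> (((G \<omega>)\<^sup>T * K) *\<^sub>v X \<omega>))"
    by (rule integral_scalar_prod_indep(1)[OF mult[OF tr[OF G] const[OF K]] eta X])
  show "integrable M (\<lambda>\<omega>. f \<omega> \<bullet> (((S \<omega>)\<^sup>T * K) *\<^sub>v X \<omega>))"
    by (rule integral_scalar_prod_indep(1)[OF mult[OF tr[OF S] const[OF K]] f X])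
  show "integrable M (\<lambda>\<omega>. eta \<bullet> (((G \<omega>)\<^sup>T * MM * G \<omega>) *\<^sub>v eta))"
    by (rule integral_scalar_prod_indep(1)[OF mult[OF mult[OF tr[OF G] const[OF MM]] G] eta eta])
  show "integrable M (\<lambda>\<omega>. eta \<bullet> (((G \<omega>)\<^sup>T * MM * S \<omega>) *\<^sub>v f \<omega>))"
    by (rule integral_scalar_prod_indep(1)[OF mult[OF mult[OF tr[OF G] const[OF MM]] S] eta f])
  show "integrable M (\<lambda>\<omega>. f \<omega> \<bullet> (((S \<omega>)\<^sup>T * MM * G \<omega>) *\<^sub>v eta))"
    by (rule integral_scalar_prod_indep(1)[OF mult[OF mult[OF tr[OF S] const[OF MM]] G] f eta])
  show "integrable M (\<lambda>\<omega>. f \<omega> \<bullet> (((S \<omega>)\<^sup>T * MM * S \<omega>) *\<^sub>v f \<omega>))"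
    by (rule integral_scalar_prod_indep(1)[OF mult[OF mult[OF tr[OF S] const[OF MM]] S] f f])
qed

lemma stage_cost_cross_terms_vanish:
  fixes P3 C4 K MM Th :: "real mat" and xt eta :: "real vec" and n m \<kappa> t :: nat
  assumes P3: "P3 \<in> carrier_mat n (N * d)" and C4: "C4 \<in> carrier_mat n (N * m)"
    and K: "K \<in> carrier_mat (N * m) (N * d)" and MM: "MM \<in> carrier_mat (N * m) (N * m)"
    and Th: "Th \<in> carrier_mat (N * m) ((N - 1) * d)"
    and xt: "xt \<in> carrier_vec n" and eta: "eta \<in> carrier_vec (N * m)"
  defines "X \<equiv> wstack d N W t" and "f \<equiv> \<lambda>\<omega>. Th *\<^sub>v phistack d N phi W t \<omega>"
    and "G \<equiv> Gmat m N \<kappa> nu t" and "S \<equiv> Smat m N \<kappa> nu t"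
  shows "integral\<^sup>L M (\<lambda>\<omega>. xt \<bullet> (P3 *\<^sub>v X \<omega>)) = 0"
    "integral\<^sup>L M (\<lambda>\<omega>. xt \<bullet> ((C4 * S \<omega>) *\<^sub>v f \<omega>)) = 0"
    "integral\<^sup>L M (\<lambda>\<omega>. eta \<bullet> (((G \<omega>)\<^sup>T * K) *\<^sub>v X \<omega>)) = 0"
    "integral\<^sup>L M (\<lambda>\<omega>. eta \<bullet> (((G \<omega>)\<^sup>T * MM * S \<omega>) *\<^sub>v f \<omega>)) = 0"
    "integral\<^sup>L M (\<lambda>\<omega>. f \<omega> \<bullet> (((S \<omega>)\<^sup>T * MM * G \<omega>) *\<^sub>v eta)) = 0"
proof -
  note G = bounded_Y_mat_Gmat[of m \<kappa> t, folded G_def]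
    and S = bounded_Y_mat_Smat[of m \<kappa> t, folded S_def]
    and X = L2_X_vec_wstack[of t, folded X_def] zero_mean_vec_wstack[of t, folded X_def]
    and f = L2_X_vec_mult_mat[OF Th L2_X_vec_phistack, of t, folded f_def]
      zero_mean_vec_mult_mat[OF Th L2_X_vec_phistack zero_mean_vec_phistack, of t, folded f_def]
  note const = bounded_Y_mat_const and mult = bounded_Y_mat_mult and tr = bounded_Y_mat_transpose
  show "integral\<^sup>L M (\<lambda>\<omega>. xt \<bullet> (P3 *\<^sub>v X \<omega>)) = 0"
    by (rule integral_scalar_prod_zero_mean_right[OF const[OF P3] xt X])
  show "integral\<^sup>L M (\<lambda>\<omega>. xt \<bullet> ((C4 * S \<omega>) *\<^sub>v f \<omega>)) = 0"
    by (rule integral_scalar_prod_zero_mean_right[OF mult[OF const[OF C4] S] xt f])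
  show "integral\<^sup>L M (\<lambda>\<omega>. eta \<bullet> (((G \<omega>)\<^sup>T * K) *\<^sub>v X \<omega>)) = 0"
    by (rule integral_scalar_prod_zero_mean_right[OF mult[OF tr[OF G] const[OF K]] eta X])
  show "integral\<^sup>L M (\<lambda>\<omega>. eta \<bullet> (((G \<omega>)\<^sup>T * MM * S \<omega>) *\<^sub>v f \<omega>)) = 0"
    by (rule integral_scalar_prod_zero_mean_right[OF mult[OF mult[OF tr[OF G] const[OF MM]] S] eta f])
  show "integral\<^sup>L M (\<lambda>\<omega>. f \<omega> \<bullet> (((S \<omega>)\<^sup>T * MM * G \<omega>) *\<^sub>v eta)) = 0"
    by (rule integral_scalar_prod_zero_mean_left[OF mult[OF mult[OF tr[OF S] const[OF MM]] G] eta f])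
qed

lemma stage_cost_constant_term_integrals:
  fixes P2 C4 MM :: "real mat" and xt eta :: "real vec" and n m \<kappa> t :: nat
  assumes P2: "P2 \<in> carrier_mat (N * d) (N * d)" and C4: "C4 \<in> carrier_mat n (N * m)"
    and MM: "MM \<in> carrier_mat (N * m) (N * m)"
    and xt: "xt \<in> carrier_vec n" and eta: "eta \<in> carrier_vec (N * m)"
  defines "X \<equiv> wstack d N W t" and "G \<equiv> Gmat m N \<kappa> nu t"
  shows "integral\<^sup>L M (\<lambda>\<omega>. X \<omega> \<bullet> (P2 *\<^sub>v X \<omega>)) = mtrace (P2 * SigW M d N W t)"
    "integral\<^sup>L M (\<lambda>\<omega>. xt \<bullet> ((C4 * G \<omega>) *\<^sub>v eta)) = xt \<bullet> ((C4 * muG M m N \<kappa> nu t) *\<^sub>v eta)"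
    "integral\<^sup>L M (\<lambda>\<omega>. eta \<bullet> (((G \<omega>)\<^sup>T * MM * G \<omega>) *\<^sub>v eta))
       = qform (mexp M (N * m) (N * m) (\<lambda>\<omega>. (G \<omega>)\<^sup>T * MM * G \<omega>)) eta"
proof -
  note G = bounded_Y_mat_Gmat[of m \<kappa> t, folded G_def] and X = L2_X_vec_wstack[of t, folded X_def]
  note const = bounded_Y_mat_const and mult = bounded_Y_mat_mult and tr = bounded_Y_mat_transpose
    and int = bounded_Y_mat_integrable
  have "SigW M d N W t = mexp M (N * d) (N * d) (\<lambda>\<omega>. outer (X \<omega>) (X \<omega>))"
    by (simp only: SigW_def X_def)
  then show "integral\<^sup>L M (\<lambda>\<omega>. X \<omega> \<bullet> (P2 *\<^sub>v X \<omega>)) = mtrace (P2 * SigW M d N W t)"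
    using integral_scalar_prod_indep(2)[OF const[OF P2] X X] by (simp only: mexp_const[OF P2])
  show "integral\<^sup>L M (\<lambda>\<omega>. xt \<bullet> ((C4 * G \<omega>) *\<^sub>v eta)) = xt \<bullet> ((C4 * muG M m N \<kappa> nu t) *\<^sub>v eta)"
    using integral_scalar_prod_const[OF mult[OF const[OF C4] G] xt eta] mexp_mult_left[OF C4 int[OF G]]
    by (simp only: muG_def G_def)
  show "integral\<^sup>L M (\<lambda>\<omega>. eta \<bullet> (((G \<omega>)\<^sup>T * MM * G \<omega>) *\<^sub>v eta))
       = qform (mexp M (N * m) (N * m) (\<lambda>\<omega>. (G \<omega>)\<^sup>T * MM * G \<omega>)) eta"
    unfolding qform_def
    by (rule integral_scalar_prod_const[OF mult[OF mult[OF tr[OF G] const[OF MM]] G] eta eta])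
qed

lemma integral_feedback_noise_term:
  fixes K Th :: "real mat" and m \<kappa> t :: nat
  assumes K: "K \<in> carrier_mat (N * m) (N * d)" and Th: "Th \<in> carrier_mat (N * m) ((N - 1) * d)"
  defines "X \<equiv> wstack d N W t" and "F \<equiv> phistack d N phi W t" and "S \<equiv> Smat m N \<kappa> nu t"
  shows "integral\<^sup>L M (\<lambda>\<omega>. (Th *\<^sub>v F \<omega>) \<bullet> (((S \<omega>)\<^sup>T * K) *\<^sub>v X \<omega>))
       = mtrace (Th\<^sup>T * ((muS M m N \<kappa> nu t)\<^sup>T * K) * SigPhi' M d N phi W t)"
proof -
  note S = bounded_Y_mat_Smat[of m \<kappa> t, folded S_def]
    and X = L2_X_vec_wstack[of t, folded X_def] and F = L2_X_vec_phistack[of t, folded F_def]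
  note const = bounded_Y_mat_const and mult = bounded_Y_mat_mult and tr = bounded_Y_mat_transpose
    and int = bounded_Y_mat_integrable
  have ThT: "Th\<^sup>T \<in> carrier_mat ((N - 1) * d) (N * m)" using Th by simp
  have Fc: "F \<omega> \<in> carrier_vec ((N - 1) * d)" and Xc: "X \<omega> \<in> carrier_vec (N * d)"
    and Sc: "S \<omega> \<in> carrier_mat (N * m) (N * m)" for \<omega>
    by (simp_all add: F_def X_def S_def phistack_def wstack_def Smat_def)
  have S_transpose: "mexp M (N * m) (N * m) (\<lambda>\<omega>. (S \<omega>)\<^sup>T) = (mexp M (N * m) (N * m) S)\<^sup>T"
    by (rule mexp_transpose) (rule Sc)
  have "(Th *\<^sub>v F \<omega>) \<bullet> (((S \<omega>)\<^sup>T * K) *\<^sub>v X \<omega>) = F \<omega> \<bullet> ((Th\<^sup>T * ((S \<omega>)\<^sup>T * K)) *\<^sub>v X \<omega>)"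
    if "\<omega> \<in> space M" for \<omega>
  proof -
    have SK: "(S \<omega>)\<^sup>T * K \<in> carrier_mat (N * m) (N * d)" using Sc[of \<omega>] K by simp
    then have "((S \<omega>)\<^sup>T * K) *\<^sub>v X \<omega> \<in> carrier_vec (N * m)" using Xc[of \<omega>] by simp
    from transpose_vec_mult_scalar[OF ThT this Fc]
    have "(Th *\<^sub>v F \<omega>) \<bullet> (((S \<omega>)\<^sup>T * K) *\<^sub>v X \<omega>) = F \<omega> \<bullet> (Th\<^sup>T *\<^sub>v (((S \<omega>)\<^sup>T * K) *\<^sub>v X \<omega>))"
      by (simp only: transpose_transpose)
    also have "Th\<^sup>T *\<^sub>v (((S \<omega>)\<^sup>T * K) *\<^sub>v X \<omega>) = (Th\<^sup>T * ((S \<omega>)\<^sup>T * K)) *\<^sub>v X \<omega>"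
      by (rule assoc_mult_mat_vec[OF ThT SK Xc, symmetric])
    finally show ?thesis .
  qed
  then have "integral\<^sup>L M (\<lambda>\<omega>. (Th *\<^sub>v F \<omega>) \<bullet> (((S \<omega>)\<^sup>T * K) *\<^sub>v X \<omega>))
      = integral\<^sup>L M (\<lambda>\<omega>. F \<omega> \<bullet> ((Th\<^sup>T * ((S \<omega>)\<^sup>T * K)) *\<^sub>v X \<omega>))"
    by (rule Bochner_Integration.integral_cong[OF refl])
  also have "\<dots> = mtrace (mexp M ((N - 1) * d) (N * d) (\<lambda>\<omega>. Th\<^sup>T * ((S \<omega>)\<^sup>T * K))
      * mexp M (N * d) ((N - 1) * d) (\<lambda>\<omega>. outer (X \<omega>) (F \<omega>)))"
    by (rule integral_scalar_prod_indep(2)[OF mult[OF const[OF ThT] mult[OF tr[OF S] const[OF K]]] F X])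
  also have "mexp M ((N - 1) * d) (N * d) (\<lambda>\<omega>. Th\<^sup>T * ((S \<omega>)\<^sup>T * K))
      = Th\<^sup>T * mexp M (N * m) (N * d) (\<lambda>\<omega>. (S \<omega>)\<^sup>T * K)"
    by (rule mexp_mult_left[OF ThT int[OF mult[OF tr[OF S] const[OF K]]]])
  also have "mexp M (N * m) (N * d) (\<lambda>\<omega>. (S \<omega>)\<^sup>T * K) = (muS M m N \<kappa> nu t)\<^sup>T * K"
    using mexp_mult_right[OF K int[OF tr[OF S]]] S_transpose by (simp only: muS_def S_def)
  also have "mexp M (N * d) ((N - 1) * d) (\<lambda>\<omega>. outer (X \<omega>) (F \<omega>)) = SigPhi' M d N phi W t"
    by (simp only: SigPhi'_def X_def F_def)
  finally show "integral\<^sup>L M (\<lambda>\<omega>. (Th *\<^sub>v F \<omega>) \<bullet> (((S \<omega>)\<^sup>T * K) *\<^sub>v X \<omega>))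
       = mtrace (Th\<^sup>T * ((muS M m N \<kappa> nu t)\<^sup>T * K) * SigPhi' M d N phi W t)" .
qed

lemma integral_feedback_quadratic_term:
  fixes MM Th :: "real mat" and m \<kappa> t :: nat
  assumes MM: "MM \<in> carrier_mat (N * m) (N * m)" and Th: "Th \<in> carrier_mat (N * m) ((N - 1) * d)"
  defines "F \<equiv> phistack d N phi W t" and "S \<equiv> Smat m N \<kappa> nu t"
  shows "integral\<^sup>L M (\<lambda>\<omega>. (Th *\<^sub>v F \<omega>) \<bullet> (((S \<omega>)\<^sup>T * MM * S \<omega>) *\<^sub>v (Th *\<^sub>v F \<omega>)))
       = mtrace (Th\<^sup>T * mexp M (N * m) (N * m) (\<lambda>\<omega>. (S \<omega>)\<^sup>T * MM * S \<omega>) * Th * SigPhi M d N phi W t)"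
proof -
  note S = bounded_Y_mat_Smat[of m \<kappa> t, folded S_def] and F = L2_X_vec_phistack[of t, folded F_def]
  note const = bounded_Y_mat_const and mult = bounded_Y_mat_mult and tr = bounded_Y_mat_transpose
    and int = bounded_Y_mat_integrable
  have ThT: "Th\<^sup>T \<in> carrier_mat ((N - 1) * d) (N * m)" using Th by simp
  have Fc: "F \<omega> \<in> carrier_vec ((N - 1) * d)" and Sc: "S \<omega> \<in> carrier_mat (N * m) (N * m)" for \<omega>
    by (simp_all add: F_def S_def phistack_def Smat_def)
  have SMS: "bounded_Y_mat (N * m) (N * m) (\<lambda>\<omega>. (S \<omega>)\<^sup>T * MM * S \<omega>)"
    by (rule mult[OF mult[OF tr[OF S] const[OF MM]] S])
  have "(Th *\<^sub>v F \<omega>) \<bullet> (((S \<omega>)\<^sup>T * MM * S \<omega>) *\<^sub>v (Th *\<^sub>v F \<omega>))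
      = F \<omega> \<bullet> ((Th\<^sup>T * ((S \<omega>)\<^sup>T * MM * S \<omega>) * Th) *\<^sub>v F \<omega>)" if "\<omega> \<in> space M" for \<omega>
    using Th MM Sc[of \<omega>] Fc[of \<omega>] by (intro scalar_prod_mult_transpose_mult) auto
  then have "integral\<^sup>L M (\<lambda>\<omega>. (Th *\<^sub>v F \<omega>) \<bullet> (((S \<omega>)\<^sup>T * MM * S \<omega>) *\<^sub>v (Th *\<^sub>v F \<omega>)))
      = integral\<^sup>L M (\<lambda>\<omega>. F \<omega> \<bullet> ((Th\<^sup>T * ((S \<omega>)\<^sup>T * MM * S \<omega>) * Th) *\<^sub>v F \<omega>))"
    by (rule Bochner_Integration.integral_cong[OF refl])
  also have "\<dots> = mtrace (mexp M ((N - 1) * d) ((N - 1) * d) (\<lambda>\<omega>. Th\<^sup>T * ((S \<omega>)\<^sup>T * MM * S \<omega>) * Th)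
      * mexp M ((N - 1) * d) ((N - 1) * d) (\<lambda>\<omega>. outer (F \<omega>) (F \<omega>)))"
    by (rule integral_scalar_prod_indep(2)[OF mult[OF mult[OF const[OF ThT] SMS] const[OF Th]] F F])
  also have "mexp M ((N - 1) * d) ((N - 1) * d) (\<lambda>\<omega>. Th\<^sup>T * ((S \<omega>)\<^sup>T * MM * S \<omega>) * Th)
      = mexp M ((N - 1) * d) (N * m) (\<lambda>\<omega>. Th\<^sup>T * ((S \<omega>)\<^sup>T * MM * S \<omega>)) * Th"
    by (rule mexp_mult_right[OF Th int[OF mult[OF const[OF ThT] SMS]]])
  also have "mexp M ((N - 1) * d) (N * m) (\<lambda>\<omega>. Th\<^sup>T * ((S \<omega>)\<^sup>T * MM * S \<omega>))
      = Th\<^sup>T * mexp M (N * m) (N * m) (\<lambda>\<omega>. (S \<omega>)\<^sup>T * MM * S \<omega>)"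
    by (rule mexp_mult_left[OF ThT int[OF SMS]])
  also have "mexp M ((N - 1) * d) ((N - 1) * d) (\<lambda>\<omega>. outer (F \<omega>) (F \<omega>)) = SigPhi M d N phi W t"
    by (simp only: SigPhi_def F_def)
  finally show "integral\<^sup>L M (\<lambda>\<omega>. (Th *\<^sub>v F \<omega>) \<bullet> (((S \<omega>)\<^sup>T * MM * S \<omega>) *\<^sub>v (Th *\<^sub>v F \<omega>)))
       = mtrace (Th\<^sup>T * mexp M (N * m) (N * m) (\<lambda>\<omega>. (S \<omega>)\<^sup>T * MM * S \<omega>) * Th * SigPhi M d N phi W t)" .
qed

lemma Jcost_eq_Jtract:
  fixes m \<kappa> t :: nat and A B Q Qf R Th :: "real mat" and xt eta :: "real vec"
  assumes Q: "sym_psd d Q" and Qf: "sym_psd d Qf" and xt: "xt \<in> carrier_vec d"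
    and eta: "eta \<in> carrier_vec (N * m)" and Th: "Th \<in> carrier_mat (N * m) ((N - 1) * d)"
  shows "integrable M (\<lambda>\<omega>. qform (calQ N d Q Qf) (xtraj d m N \<kappa> A B phi W nu t xt eta Th \<omega>)
                    + qform (calR N m R) (uapplied d m N \<kappa> phi W nu t eta Th \<omega>))"
    and "Jcost M d m N \<kappa> A B Q Qf R phi W nu t xt eta Th = Jtract M d m N \<kappa> A B Q Qf R phi W nu t xt eta Th"
proof -
  let ?CA = "calA N d A" and ?CB = "calB N d m A B" and ?CD = "calD N d A" and ?CQ = "calQ N d Q Qf"
    and ?CR = "calR N m R" and ?G = "Gmat m N \<kappa> nu t" and ?S = "Smat m N \<kappa> nu t"
    and ?F = "phistack d N phi W t" and ?X = "wstack d N W t"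
  let ?MM = "?CB\<^sup>T * ?CQ * ?CB + ?CR" and ?K = "?CB\<^sup>T * ?CQ * ?CD"
  have CA: "?CA \<in> carrier_mat ((N + 1) * d) d" and CB: "?CB \<in> carrier_mat ((N + 1) * d) (N * m)"
    and CD: "?CD \<in> carrier_mat ((N + 1) * d) (N * d)"
    and CQ: "?CQ \<in> carrier_mat ((N + 1) * d) ((N + 1) * d)" and CR: "?CR \<in> carrier_mat (N * m) (N * m)"
    by (rule calA_carrier calB_carrier calD_carrier calQ_carrier calR_carrier)+
  have P2: "?CD\<^sup>T * ?CQ * ?CD \<in> carrier_mat (N * d) (N * d)"
    and P3: "?CA\<^sup>T * ?CQ * ?CD \<in> carrier_mat d (N * d)"
    and C4: "?CA\<^sup>T * ?CQ * ?CB \<in> carrier_mat d (N * m)"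
    and K: "?K \<in> carrier_mat (N * m) (N * d)" and MM: "?MM \<in> carrier_mat (N * m) (N * m)"
    using CA CB CD CQ CR by simp_all
  have pw: "qform ?CQ (xtraj d m N \<kappa> A B phi W nu t xt eta Th \<omega>)
      + qform ?CR (uapplied d m N \<kappa> phi W nu t eta Th \<omega>) =
     xt \<bullet> ((?CA\<^sup>T * ?CQ * ?CA) *\<^sub>v xt) + ?X \<omega> \<bullet> ((?CD\<^sup>T * ?CQ * ?CD) *\<^sub>v ?X \<omega>)
     + 2 * (xt \<bullet> ((?CA\<^sup>T * ?CQ * ?CD) *\<^sub>v ?X \<omega>))
     + 2 * (xt \<bullet> ((?CA\<^sup>T * ?CQ * ?CB * ?G \<omega>) *\<^sub>v eta))
     + 2 * (xt \<bullet> ((?CA\<^sup>T * ?CQ * ?CB * ?S \<omega>) *\<^sub>v (Th *\<^sub>v ?F \<omega>)))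
     + 2 * (eta \<bullet> (((?G \<omega>)\<^sup>T * ?K) *\<^sub>v ?X \<omega>))
     + 2 * ((Th *\<^sub>v ?F \<omega>) \<bullet> (((?S \<omega>)\<^sup>T * ?K) *\<^sub>v ?X \<omega>))
     + eta \<bullet> (((?G \<omega>)\<^sup>T * ?MM * ?G \<omega>) *\<^sub>v eta)
     + eta \<bullet> (((?G \<omega>)\<^sup>T * ?MM * ?S \<omega>) *\<^sub>v (Th *\<^sub>v ?F \<omega>))
     + (Th *\<^sub>v ?F \<omega>) \<bullet> (((?S \<omega>)\<^sup>T * ?MM * ?G \<omega>) *\<^sub>v eta)
     + (Th *\<^sub>v ?F \<omega>) \<bullet> (((?S \<omega>)\<^sup>T * ?MM * ?S \<omega>) *\<^sub>v (Th *\<^sub>v ?F \<omega>))" for \<omega>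
    unfolding xtraj_def uapplied_def
    by (rule stage_cost_expansion[OF CA CB CD CQ calQ_sym[OF Q Qf] CR _ _ xt eta]) (use Th in \<open>simp_all add: Gmat_def Smat_def phistack_def wstack_def\<close>)
  note int = stage_cost_terms_integrable[OF P2 P3 C4 K MM Th xt eta]
  note zero = stage_cost_cross_terms_vanish[OF P3 C4 K MM Th xt eta]
  note val = stage_cost_constant_term_integrals[OF P2 C4 MM xt eta]
    integral_feedback_noise_term[OF K Th] integral_feedback_quadratic_term[OF MM Th]
  show "integrable M (\<lambda>\<omega>. qform ?CQ (xtraj d m N \<kappa> A B phi W nu t xt eta Th \<omega>)
      + qform ?CR (uapplied d m N \<kappa> phi W nu t eta Th \<omega>))"
    unfolding pw using int by (simp del: assoc_mult_mat)
  have "Jcost M d m N \<kappa> A B Q Qf R phi W nu t xt eta Th =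
     xt \<bullet> ((?CA\<^sup>T * ?CQ * ?CA) *\<^sub>v xt) + mtrace ((?CD\<^sup>T * ?CQ * ?CD) * SigW M d N W t)
     + 2 * (xt \<bullet> ((?CA\<^sup>T * ?CQ * ?CB * muG M m N \<kappa> nu t) *\<^sub>v eta))
     + 2 * mtrace (Th\<^sup>T * ((muS M m N \<kappa> nu t)\<^sup>T * ?K) * SigPhi' M d N phi W t)
     + qform (SigG M d m N \<kappa> A B Q Qf R nu t) eta
     + mtrace (Th\<^sup>T * SigS M d m N \<kappa> A B Q Qf R nu t * Th * SigPhi M d N phi W t)"
    unfolding Jcost_def pw SigG_def SigS_def Mmat_def using int zero val by (simp add: prob_space del: assoc_mult_mat)
  also have "Th\<^sup>T * ((muS M m N \<kappa> nu t)\<^sup>T * ?K) = Th\<^sup>T * (muS M m N \<kappa> nu t)\<^sup>T * ?CB\<^sup>T * ?CQ * ?CD"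
    by (rule mult_mat_assoc5) (use Th CB CQ CD in \<open>auto simp: muS_def\<close>)
  finally show "Jcost M d m N \<kappa> A B Q Qf R phi W nu t xt eta Th = Jtract M d m N \<kappa> A B Q Qf R phi W nu t xt eta Th"
    unfolding Jtract_def ct_def qform_def[of _ xt] by (simp del: assoc_mult_mat)
qed

lemma Jcost_convex:
  assumes Q: "sym_psd d Q" and Qf: "sym_psd d Qf" and R: "sym_pd m R" and xt: "xt \<in> carrier_vec d"
    and z1: "decision d m N e1 T1" and z2: "decision d m N e2 T2" and a: "0 \<le> a" "a \<le> 1"
  shows "Jcost M d m N \<kappa> A B Q Qf R phi W nu t xt (a \<cdot>\<^sub>v e1 + (1 - a) \<cdot>\<^sub>v e2) (a \<cdot>\<^sub>m T1 + (1 - a) \<cdot>\<^sub>m T2)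
     \<le> a * Jcost M d m N \<kappa> A B Q Qf R phi W nu t xt e1 T1
       + (1 - a) * Jcost M d m N \<kappa> A B Q Qf R phi W nu t xt e2 T2"
proof -
  have e1: "e1 \<in> carrier_vec (N * m)" and T1: "T1 \<in> carrier_mat (N * m) ((N - 1) * d)"
    and e2: "e2 \<in> carrier_vec (N * m)" and T2: "T2 \<in> carrier_mat (N * m) ((N - 1) * d)"
    using z1 z2 unfolding decision_def theta_struct_def by auto
  define J where "J e T \<omega> = qform (calQ N d Q Qf) (xtraj d m N \<kappa> A B phi W nu t xt e T \<omega>)
                    + qform (calR N m R) (uapplied d m N \<kappa> phi W nu t e T \<omega>)" for e T \<omega>
  have iJ: "integrable M (J e T)" if "e \<in> carrier_vec (N * m)" "T \<in> carrier_mat (N * m) ((N - 1) * d)" for e T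
    unfolding J_def by (rule Jcost_eq_Jtract(1)[OF Q Qf xt that])
  have pointwise: "J (a \<cdot>\<^sub>v e1 + (1 - a) \<cdot>\<^sub>v e2) (a \<cdot>\<^sub>m T1 + (1 - a) \<cdot>\<^sub>m T2) \<omega>
      \<le> a * J e1 T1 \<omega> + (1 - a) * J e2 T2 \<omega>" for \<omega>
    unfolding J_def by (rule stage_cost_convex[OF Q Qf R xt e1 T1 e2 T2 a])
  have "integral\<^sup>L M (J (a \<cdot>\<^sub>v e1 + (1 - a) \<cdot>\<^sub>v e2) (a \<cdot>\<^sub>m T1 + (1 - a) \<cdot>\<^sub>m T2))
      \<le> integral\<^sup>L M (\<lambda>\<omega>. a * J e1 T1 \<omega> + (1 - a) * J e2 T2 \<omega>)"
    using e1 e2 T1 T2 iJ[OF e1 T1] iJ[OF e2 T2] by (intro integral_mono iJ pointwise) auto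
  also have "\<dots> = a * integral\<^sup>L M (J e1 T1) + (1 - a) * integral\<^sup>L M (J e2 T2)"
    using iJ[OF e1 T1] iJ[OF e2 T2] by simp
  finally show ?thesis unfolding Jcost_def J_def[abs_def] .
qed

lemma tightened_imp_feasible:
  assumes dec: "decision d m N e T" and tt: "tightened d m N phimax Umax e T"
  shows "feasible M d m N phi W t Umax e T"
proof -
  have e: "e \<in> carrier_vec (N*m)" and T: "T \<in> carrier_mat (N*m) ((N-1)*d)"
    using dec unfolding decision_def theta_struct_def by auto
  have F: "phistack d N phi W t \<omega> \<in> carrier_vec ((N-1)*d)" for \<omega> by (simp add: phistack_def)
  have "\<bar>ucomp d N phi W t e T \<omega> $ i\<bar> \<le> Umax" if i: "i < N*m" for \<omega> i
  proof -
    have "ucomp d N phi W t e T \<omega> $ i = e $ i + (\<Sum>k<(N-1)*d. T $$ (i,k) * phistack d N phi W t \<omega> $ k)"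
      unfolding ucomp_def using e T F[of \<omega>] i mult_mat_vec_entry_sum[OF T F i] by simp
    also have "\<bar>\<dots>\<bar> \<le> \<bar>e $ i\<bar> + (\<Sum>k<(N-1)*d. \<bar>T $$ (i,k)\<bar> * \<bar>phistack d N phi W t \<omega> $ k\<bar>)"
      by (rule order_trans[OF abs_triangle_ineq]) (simp add: sum_abs[THEN order_trans] abs_mult)
    also have "\<dots> \<le> \<bar>e $ i\<bar> + (\<Sum>k<(N-1)*d. \<bar>T $$ (i,k)\<bar> * phimax)"
      by (intro add_left_mono sum_mono mult_left_mono phistack_bound) auto
    also have "\<dots> \<le> Umax" using tt i unfolding tightened_def by (simp add: sum_distrib_right)
    finally show ?thesis .
  qed
  then show ?thesis using dec unfolding feasible_def by (auto intro!: AE_I2)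
qed

end

theorem theorem3:
  fixes M :: "'a measure"
    and d m N \<kappa> t :: nat
    and A B Q Qf R :: "real mat"
    and W :: "nat \<Rightarrow> 'a \<Rightarrow> nat \<Rightarrow> real"
    and nu :: "nat \<Rightarrow> 'a \<Rightarrow> real"
    and phi :: "nat \<Rightarrow> real vec \<Rightarrow> real vec"
    and p Umax phimax :: real
    and xt :: "real vec"
  assumes P: "prob_space M"
    and dims: "A \<in> carrier_mat d d" "B \<in> carrier_mat d m"
    and Qpsd: "sym_psd d Q" and Qfpsd: "sym_psd d Qf" and Rpd: "sym_pd m R"
    and Umax: "Umax > 0"
    and horizon: "1 \<le> \<kappa>" "\<kappa> \<le> N"
    and t_mult: "\<kappa> dvd t"
    and xt: "xt \<in> carrier_vec d"
    \<comment> \<open>noise: i.i.d., zero mean, bounded fourth moments, symmetric components\<close>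
    and w_indep: "prob_space.indep_vars M (\<lambda>_. Rd d) (wrv d W) UNIV"
    and w_ident: "\<And>s. distr M (Rd d) (wrv d W s) = distr M (Rd d) (wrv d W 0)"
    and w_mean: "\<And>s j. j < d \<Longrightarrow>
                   integrable M (\<lambda>\<omega>. W s \<omega> j) \<and> integral\<^sup>L M (\<lambda>\<omega>. W s \<omega> j) = 0"
    and w_4th: "\<And>s j. j < d \<Longrightarrow> integrable M (\<lambda>\<omega>. (W s \<omega> j) ^ 4)"
    and w_sym: "\<And>s j. j < d \<Longrightarrow>
                   distr M borel (\<lambda>\<omega>. W s \<omega> j) = distr M borel (\<lambda>\<omega>. - W s \<omega> j)"
    \<comment> \<open>erasure channel: i.i.d. Bernoulli(p), independent of the noise\<close>
    and p: "0 < p" "p \<le> 1"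
    and nu_01: "\<And>s \<omega>. nu s \<omega> \<in> {0, 1}"
    and nu_indep: "prob_space.indep_vars M (\<lambda>_. borel) nu UNIV"
    and nu_p: "\<And>s. measure M {\<omega> \<in> space M. nu s \<omega> = 1} = p"
    and nu_w_indep: "prob_space.indep_var M
                       (PiM UNIV (\<lambda>_. Rd d)) (\<lambda>\<omega> s. wrv d W s \<omega>)
                       (PiM UNIV (\<lambda>_. PiM UNIV (\<lambda>_. borel))) (\<lambda>\<omega> s (_::nat). nu s \<omega>)"
    \<comment> \<open>the maps phi_1, ..., phi_{N-1}\<close>
    and phi_meas: "\<And>i. 1 \<le> i \<Longrightarrow> i \<le> N - 1 \<Longrightarrow>
                     (\<lambda>v. restrict (\<lambda>j. phi i (vec d v) $ j) {..<d}) \<in> Rd d \<rightarrow>\<^sub>M Rd d"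
    and phi_dim: "\<And>i v. 1 \<le> i \<Longrightarrow> i \<le> N - 1 \<Longrightarrow> v \<in> carrier_vec d \<Longrightarrow>
                     phi i v \<in> carrier_vec d"
    and phi_sym: "\<And>i v. 1 \<le> i \<Longrightarrow> i \<le> N - 1 \<Longrightarrow> v \<in> carrier_vec d \<Longrightarrow>
                     phi i (- v) = - phi i v"
    and phi_bound: "\<And>i v j. 1 \<le> i \<Longrightarrow> i \<le> N - 1 \<Longrightarrow> v \<in> carrier_vec d \<Longrightarrow> j < d \<Longrightarrow>
                     \<bar>phi i v $ j\<bar> \<le> phimax"
    and phi_mean: "\<And>i s j. 1 \<le> i \<Longrightarrow> i \<le> N - 1 \<Longrightarrow> j < d \<Longrightarrow>
                     integral\<^sup>L M (\<lambda>\<omega>. phi i (wvec d W s \<omega>) $ j) = 0"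
  shows
    \<comment> \<open>feasibility\<close>
    "(\<exists>\<eta> \<Theta>. feasible M d m N phi W t Umax \<eta> \<Theta>)
    \<comment> \<open>convexity of the feasible set\<close>
     \<and> (\<forall>\<eta>1 \<Theta>1 \<eta>2 \<Theta>2 a. feasible M d m N phi W t Umax \<eta>1 \<Theta>1
            \<and> feasible M d m N phi W t Umax \<eta>2 \<Theta>2 \<and> 0 \<le> a \<and> a \<le> 1 \<longrightarrow>
          feasible M d m N phi W t Umax (a \<cdot>\<^sub>v \<eta>1 + (1 - a) \<cdot>\<^sub>v \<eta>2) (a \<cdot>\<^sub>m \<Theta>1 + (1 - a) \<cdot>\<^sub>m \<Theta>2))
    \<comment> \<open>convexity of the objective\<close>
     \<and> (\<forall>\<eta>1 \<Theta>1 \<eta>2 \<Theta>2 a. feasible M d m N phi W t Umax \<eta>1 \<Theta>1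
            \<and> feasible M d m N phi W t Umax \<eta>2 \<Theta>2 \<and> 0 \<le> a \<and> a \<le> 1 \<longrightarrow>
          Jcost M d m N \<kappa> A B Q Qf R phi W nu t xt
              (a \<cdot>\<^sub>v \<eta>1 + (1 - a) \<cdot>\<^sub>v \<eta>2) (a \<cdot>\<^sub>m \<Theta>1 + (1 - a) \<cdot>\<^sub>m \<Theta>2)
          \<le> a * Jcost M d m N \<kappa> A B Q Qf R phi W nu t xt \<eta>1 \<Theta>1
            + (1 - a) * Jcost M d m N \<kappa> A B Q Qf R phi W nu t xt \<eta>2 \<Theta>2)
    \<comment> \<open>the objective equals the tractable expression\<close>
     \<and> (\<forall>\<eta> \<Theta>. decision d m N \<eta> \<Theta> \<longrightarrow>
          Jcost M d m N \<kappa> A B Q Qf R phi W nu t xt \<eta> \<Theta>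
          = Jtract M d m N \<kappa> A B Q Qf R phi W nu t xt \<eta> \<Theta>)
    \<comment> \<open>the tightened constraints imply the original constraints\<close>
     \<and> (\<forall>\<eta> \<Theta>. decision d m N \<eta> \<Theta> \<and> tightened d m N phimax Umax \<eta> \<Theta> \<longrightarrow>
          feasible M d m N phi W t Umax \<eta> \<Theta>)"
proof -
  interpret tp3_model M d N W nu phi phimax
    by (rule tp3_model.intro[OF P nu_w_indep w_mean w_4th nu_01 phi_meas phi_bound phi_mean])
  have decision_carrier: "\<eta> \<in> carrier_vec (N * m) \<and> \<Theta> \<in> carrier_mat (N * m) ((N - 1) * d)"
    if "decision d m N \<eta> \<Theta>" for \<eta> \<Theta>
    using that unfolding decision_def theta_struct_def by simp
  have feasible_decision: "decision d m N \<eta> \<Theta>" if "feasible M d m N phi W t Umax \<eta> \<Theta>" for \<eta> \<Theta>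
    using that unfolding feasible_def by simp
  show ?thesis
  proof (intro conjI allI impI; (elim conjE)?)
    show "\<exists>\<eta> \<Theta>. feasible M d m N phi W t Umax \<eta> \<Theta>"
      using feasible_zero[OF Umax] by blast
  qed (blast intro: feasible_convex Jcost_convex[OF Qpsd Qfpsd Rpd xt] feasible_decision
      Jcost_eq_Jtract(2)[OF Qpsd Qfpsd xt] tightened_imp_feasible dest: decision_carrier)+
qed

end
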